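(* Let $\alpha>2$ and $\rho\in(0,1)$, and let $\mathbf{R}=\begin{pmatrix}1&\rho\\ \rho&1\end{pmatrix}$. Let $\mathbf{h}_1,\mathbf{h}_2\in\mathbb{C}^2$ be independent standard circularly-symmetric complex Gaussian random vectors (mean zero, $\mathbb{E}\{\mathbf{h}_j\mathbf{h}_j^{\rm H}\}=\mathbf{I}_2$, $\mathbb{E}\{\mathbf{h}_j\mathbf{h}_j^{\rm T}\}=\mathbf{0}$), set $\tilde{\mathbf{h}}_j=\mathbf{R}^{1/2}\mathbf{h}_j$, and let ${\rm g}=\left|\tilde{\mathbf{h}}_1^{\rm H}\tilde{\mathbf{h}}_2\right|^2/\|\tilde{\mathbf{h}}_2\|^2$. Then $$\mathbb{E}\{{\rm g}^{2/\alpha}\}=\frac{1-\rho^2}{2\rho}\left[\mathcal{G}(1+\rho,\alpha)-\mathcal{G}(1-\rho,\alpha)\right],$$ where for $0<\eta<2$, $$\mathcal{G}(\eta,\alpha)=\frac{\eta^{2/\alpha+1}}{4}\left\{\Gamma\left(\frac{2}{\alpha}+1\right)\left[\frac{\eta}{2-\eta}+\frac{\alpha}{\alpha+2}\,{}_2F_1\left(1,\frac{2}{\alpha}+1;\frac{2}{\alpha}+2;\frac{\eta}{2}\right)\right]-\frac{\alpha\eta}{4(\alpha+1)}\Gamma\left(\frac{2}{\alpha}+2\right){}_2F_1\left(1,\frac{2}{\alpha}+2;\frac{2}{\alpha}+3;\frac{\eta}{2}\right)\right\}.$$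
   Context: $\mathbf{R}^{1/2}$ is the positive semidefinite square root of $\mathbf{R}$; $\Gamma$ is the Gamma function and ${}_2F_1$ the Gauss hypergeometric function. *)

theory Defs
  imports "HOL-Probability.Probability"
begin

definition hyp2f1 :: "real \<Rightarrow> real \<Rightarrow> real \<Rightarrow> real \<Rightarrow> real" where
  "hyp2f1 a b c z = (\<Sum>n. pochhammer a n * pochhammer b n / (pochhammer c n * fact n) * z ^ n)"

definition psd_sqrt :: "real^'n^'n \<Rightarrow> real^'n^'n" where
  "psd_sqrt A = (THE S. transpose S = S \<and> (\<forall>x. 0 \<le> x \<bullet> (S *v x)) \<and> S ** S = A)"

definition cmat :: "real^'n^'m \<Rightarrow> complex^'n^'m" where
  "cmat S = (\<chi> i j. complex_of_real (S $ i $ j))"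

definition Rmat :: "real \<Rightarrow> real^2^2" where
  "Rmat \<rho> = (\<chi> i j. if i = j then 1 else \<rho>)"

definition herm_inner :: "complex^'n \<Rightarrow> complex^'n \<Rightarrow> complex" where
  "herm_inner x y = (\<Sum>i\<in>UNIV. cnj (x $ i) * y $ i)"

definition G_fun :: "real \<Rightarrow> real \<Rightarrow> real" where
  "G_fun \<eta> \<alpha> = \<eta> powr (2/\<alpha> + 1) / 4 *
     (Gamma (2/\<alpha> + 1) * (\<eta> / (2 - \<eta>) + \<alpha> / (\<alpha> + 2) * hyp2f1 1 (2/\<alpha> + 1) (2/\<alpha> + 2) (\<eta>/2))
      - \<alpha> * \<eta> / (4 * (\<alpha> + 1)) * Gamma (2/\<alpha> + 2) * hyp2f1 1 (2/\<alpha> + 2) (2/\<alpha> + 3) (\<eta>/2))"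

text \<open>Real coordinates of the pair (h1,h2) of random vectors in C^2:
  index (j, i, b): j = True selects h1, False selects h2; i is the entry; b = True real part, False imaginary part.\<close>
definition coord :: "('a \<Rightarrow> complex^2) \<Rightarrow> ('a \<Rightarrow> complex^2) \<Rightarrow> bool \<times> 2 \<times> bool \<Rightarrow> 'a \<Rightarrow> real" where
  "coord h1 h2 = (\<lambda>(j, i, b) \<omega>. (if b then Re else Im) ((if j then h1 \<omega> else h2 \<omega>) $ i))"

end

theory Submission
  imports Defs "HOL-Real_Asymp.Real_Asymp"
begin

text \<open>In real coordinates the eight real and imaginary parts of \<open>h\<^sub>1, h\<^sub>2\<close> are independent
  \<open>N(0, 1/2)\<close>, and since \<open>S\<^sup>2 = R\<close>, \<open>g = |h\<^sub>1\<^sup>H R h\<^sub>2|\<^sup>2 / h\<^sub>2\<^sup>H R h\<^sub>2\<close>.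
  For fixed \<open>h\<^sub>2\<close>, unitary invariance of \<open>h\<^sub>1\<close> makes the numerator \<open>\<parallel>R h\<^sub>2\<parallel>\<^sup>2\<close> times an
  \<open>Exp(1)\<close> variable, so \<open>E[g\<^sup>s | h\<^sub>2] = \<Gamma>(s + 1) (\<parallel>R h\<^sub>2\<parallel>\<^sup>2 / h\<^sub>2\<^sup>H R h\<^sub>2)\<^sup>s\<close> with \<open>s = 2/\<alpha>\<close>.
  In the eigenbasis of \<open>R\<close> (eigenvalues \<open>l\<^sub>1 = 1 + \<rho>\<close>, \<open>l\<^sub>2 = 1 - \<rho>\<close>) the two quadratic forms are
  \<open>l\<^sub>1\<^sup>2 t + l\<^sub>2\<^sup>2 u\<close> and \<open>l\<^sub>1 t + l\<^sub>2 u\<close> with \<open>t, u\<close> independent \<open>Exp(1)\<close>, so only \<open>z = t/u\<close>, of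
  density \<open>1/(1 + z)\<^sup>2\<close>, matters. The substitution \<open>2y = (l\<^sub>1\<^sup>2 z + l\<^sub>2\<^sup>2)/(l\<^sub>1 z + l\<^sub>2)\<close> turns the
  remaining integral into \<open>\<integral> y\<^sup>s/(1 - y)\<^sup>2\<close> over \<open>[l\<^sub>2/2, l\<^sub>1/2]\<close>, and the power series of this
  antiderivative is the combination of \<open>\<^sub>2F\<^sub>1\<close> values in \<open>G_fun\<close>.\<close>

section \<open>Nonnegative integrals on the real line and the plane\<close>

lemma nn_integral_indicator_incseq_UN:
  fixes f :: "'a \<Rightarrow> ennreal"
  assumes inc: "incseq A" and [measurable]: "\<And>n. A n \<in> sets M" "f \<in> borel_measurable M"
  shows "(\<integral>\<^sup>+x. f x * indicator (\<Union>n. A n) x \<partial>M) = (SUP n. \<integral>\<^sup>+x. f x * indicator (A n) x \<partial>M)"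
proof -
  have "f x * indicator (\<Union>n. A n) x = (SUP n. f x * indicator (A n) x)" for x
  proof (cases "x \<in> (\<Union>n. A n)")
    case True
    then obtain m where "x \<in> A m" by blast
    then have "f x \<le> (SUP n. f x * indicator (A n) x)"
      by (intro SUP_upper2[of m]) auto
    then show ?thesis using True by (auto intro!: antisym SUP_least mult_left_mono split: split_indicator)
  qed auto
  moreover have "incseq (\<lambda>n x. f x * indicator (A n) x)"
    using inc by (auto simp: incseq_def le_fun_def intro!: mult_left_mono split: split_indicator)
  ultimately show ?thesis
    by (simp add: nn_integral_monotone_convergence_SUP)
qed

lemma UN_atLeastAtMost_unbounded:
  fixes b :: "nat \<Rightarrow> 'a :: linorder"
  assumes "\<And>x. \<exists>n. x \<le> b n"
  shows "(\<Union>n. {a..b n}) = {a..}"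
  using assms by fastforce

lemma incseq_atLeastAtMost: "mono b \<Longrightarrow> incseq (\<lambda>n. {a..b n :: 'a :: order})"
  by (auto simp: incseq_def mono_def)

lemma nn_integral_lborel2_shear_fst:
  fixes G :: "real \<times> real \<Rightarrow> ennreal"
  assumes [measurable]: "G \<in> borel_measurable borel"
  shows "(\<integral>\<^sup>+x. \<integral>\<^sup>+y. G (x + a*y, y) \<partial>lborel \<partial>lborel) = (\<integral>\<^sup>+x. \<integral>\<^sup>+y. G (x, y) \<partial>lborel \<partial>lborel)"
proof -
  have "(\<integral>\<^sup>+x. \<integral>\<^sup>+y. G (x + a*y, y) \<partial>lborel \<partial>lborel) = (\<integral>\<^sup>+y. \<integral>\<^sup>+x. G (x + a*y, y) \<partial>lborel \<partial>lborel)"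
    by (rule lborel_pair.Fubini'[symmetric]) measurable
  also have "\<dots> = (\<integral>\<^sup>+y. \<integral>\<^sup>+x. G (x, y) \<partial>lborel \<partial>lborel)"
  proof (rule nn_integral_cong)
    fix y
    show "(\<integral>\<^sup>+x. G (x + a*y, y) \<partial>lborel) = (\<integral>\<^sup>+x. G (x, y) \<partial>lborel)"
      using nn_integral_real_affine[where f="\<lambda>x. G (x, y)" and c=1 and t="a*y"]
      by (simp add: add.commute)
  qed
  also have "\<dots> = (\<integral>\<^sup>+x. \<integral>\<^sup>+y. G (x, y) \<partial>lborel \<partial>lborel)"
    by (rule lborel_pair.Fubini') measurable
  finally show ?thesis .
qed

lemma nn_integral_lborel2_shear_snd:
  fixes G :: "real \<times> real \<Rightarrow> ennreal"
  assumes [measurable]: "G \<in> borel_measurable borel"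
  shows "(\<integral>\<^sup>+x. \<integral>\<^sup>+y. G (x, y + e*x) \<partial>lborel \<partial>lborel) = (\<integral>\<^sup>+x. \<integral>\<^sup>+y. G (x, y) \<partial>lborel \<partial>lborel)"
proof (rule nn_integral_cong)
  fix x
  show "(\<integral>\<^sup>+y. G (x, y + e*x) \<partial>lborel) = (\<integral>\<^sup>+y. G (x, y) \<partial>lborel)"
    using nn_integral_real_affine[where f="\<lambda>y. G (x, y)" and c=1 and t="e*x"]
    by (simp add: add.commute)
qed

lemma nn_integral_lborel2_reflect:
  fixes G :: "real \<times> real \<Rightarrow> ennreal"
  assumes [measurable]: "G \<in> borel_measurable borel"
  shows "(\<integral>\<^sup>+x. \<integral>\<^sup>+y. G (-x, -y) \<partial>lborel \<partial>lborel) = (\<integral>\<^sup>+x. \<integral>\<^sup>+y. G (x, y) \<partial>lborel \<partial>lborel)"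
proof -
  have "(\<integral>\<^sup>+x. \<integral>\<^sup>+y. G (-x, -y) \<partial>lborel \<partial>lborel) = (\<integral>\<^sup>+x. \<integral>\<^sup>+y. G (-x, y) \<partial>lborel \<partial>lborel)"
  proof (rule nn_integral_cong)
    fix x
    show "(\<integral>\<^sup>+y. G (-x, -y) \<partial>lborel) = (\<integral>\<^sup>+y. G (-x, y) \<partial>lborel)"
      using nn_integral_real_affine[where f="\<lambda>y. G (-x, y)" and c="-1" and t=0] by simp
  qed
  also have "\<dots> = (\<integral>\<^sup>+x. \<integral>\<^sup>+y. G (x, y) \<partial>lborel \<partial>lborel)"
    using nn_integral_real_affine[where f="\<lambda>x. \<integral>\<^sup>+y. G (x, y) \<partial>lborel" and c="-1" and t=0]
    by simp
  finally show ?thesis .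
qed

text \<open>A rotation by an angle other than \<open>\<pi>\<close> is a product of three shears.\<close>

lemma nn_integral_lborel2_rotation:
  fixes G :: "real \<times> real \<Rightarrow> ennreal"
  assumes [measurable]: "G \<in> borel_measurable borel" and cd: "c\<^sup>2 + d\<^sup>2 = 1"
  shows "(\<integral>\<^sup>+x. \<integral>\<^sup>+y. G (c*x + d*y, -d*x + c*y) \<partial>lborel \<partial>lborel) = (\<integral>\<^sup>+x. \<integral>\<^sup>+y. G (x, y) \<partial>lborel \<partial>lborel)"
proof (cases "c = -1")
  case True
  then have "d = 0" using cd by (simp add: power2_eq_square)
  then show ?thesis using True nn_integral_lborel2_reflect[OF assms(1)] by simp
next
  case False
  then have c1: "1 + c \<noteq> 0" by linarith
  define t where "t = d / (1 + c)"
  have te: "1 - t*d = c" using c1 cd unfolding t_def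
    by (simp add: field_simps power2_eq_square)
  have td: "t*(2 - d*t) = d"
  proof -
    have "t*(2 - d*t) = t*(1 + c)" using te by (simp add: mult.commute)
    then show ?thesis using c1 unfolding t_def by simp
  qed
  define G1 where "G1 = (\<lambda>p. G (fst p + t * snd p, snd p))"
  define G2 where "G2 = (\<lambda>p. G1 (fst p, snd p - d * fst p))"
  have [measurable]: "G \<in> borel_measurable (borel \<Otimes>\<^sub>M borel)" by (simp add: borel_prod)
  have "G1 \<in> borel_measurable (borel \<Otimes>\<^sub>M borel)" "G2 \<in> borel_measurable (borel \<Otimes>\<^sub>M borel)"
    unfolding G2_def G1_def by measurable
  then have G1m[measurable]: "G1 \<in> borel_measurable borel" and [measurable]: "G2 \<in> borel_measurable borel"
    by (simp_all add: borel_prod)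
  have "G (c*x + d*y, -d*x + c*y) = G2 (x + t*y, y)" for x y
  proof -
    have "c*x + d*y = (x + t*y) + t*(y - d*(x + t*y))"
      by (subst te[symmetric], subst td[symmetric]) (simp add: algebra_simps)
    moreover have "-d*x + c*y = y - d*(x + t*y)"
      by (subst te[symmetric]) (simp add: algebra_simps)
    ultimately show ?thesis unfolding G2_def G1_def by simp
  qed
  then have "(\<integral>\<^sup>+x. \<integral>\<^sup>+y. G (c*x + d*y, -d*x + c*y) \<partial>lborel \<partial>lborel) = (\<integral>\<^sup>+x. \<integral>\<^sup>+y. G2 (x + t*y, y) \<partial>lborel \<partial>lborel)"
    by simp
  also have "\<dots> = (\<integral>\<^sup>+x. \<integral>\<^sup>+y. G2 (x, y) \<partial>lborel \<partial>lborel)"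
    by (rule nn_integral_lborel2_shear_fst) measurable
  also have "\<dots> = (\<integral>\<^sup>+x. \<integral>\<^sup>+y. G1 (x, y) \<partial>lborel \<partial>lborel)"
    using nn_integral_lborel2_shear_snd[OF G1m, of "-d"] unfolding G2_def by simp
  also have "\<dots> = (\<integral>\<^sup>+x. \<integral>\<^sup>+y. G (x, y) \<partial>lborel \<partial>lborel)"
    unfolding G1_def by (simp add: nn_integral_lborel2_shear_fst)
  finally show ?thesis .
qed

lemma nn_integral_square_subst:
  fixes Q :: "real \<Rightarrow> ennreal"
  assumes [measurable]: "Q \<in> borel_measurable borel" and k: "k > 0"
  shows "(\<integral>\<^sup>+x. Q (k * x\<^sup>2) * ennreal (2*k*x) * indicator {0..} x \<partial>lborel) = (\<integral>\<^sup>+t. Q t * indicator {0..} t \<partial>lborel)"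
proof -
  define b where "b n = 1 + real n" for n
  have mono: "mono b" "mono (\<lambda>n. k * (b n)\<^sup>2)"
    unfolding b_def mono_def using k by (auto intro!: mult_left_mono power_mono)
  have "\<exists>n. x \<le> b n" "\<exists>n. x \<le> k * (b n)\<^sup>2" for x
  proof -
    obtain n where "max x (x / k) \<le> real n" using real_arch_simple by blast
    then have n: "max x (x / k) \<le> b n" "1 \<le> b n" unfolding b_def by auto
    moreover have "b n \<le> (b n)\<^sup>2" using n(2) by (simp add: power2_eq_square)
    ultimately have "x / k \<le> (b n)\<^sup>2" by linarith
    then show "\<exists>n. x \<le> b n" "\<exists>n. x \<le> k * (b n)\<^sup>2"
      using n k by (auto simp: field_simps)
  qed
  then have UN: "(\<Union>n. {0..b n}) = {0..}" "(\<Union>n. {0..k * (b n)\<^sup>2}) = {0..}"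
    by (simp_all add: UN_atLeastAtMost_unbounded)
  have "(\<integral>\<^sup>+x. Q (k * x\<^sup>2) * ennreal (2*k*x) * indicator {0..b n} x \<partial>lborel)
      = (\<integral>\<^sup>+t. Q t * indicator {0..k * (b n)\<^sup>2} t \<partial>lborel)" for n
  proof -
    have "(\<integral>\<^sup>+t. Q t * indicator {(\<lambda>x. k*x\<^sup>2) 0..(\<lambda>x. k*x\<^sup>2) (b n)} t \<partial>lborel)
        = (\<integral>\<^sup>+x. Q ((\<lambda>x. k*x\<^sup>2) x) * ennreal ((\<lambda>x. 2*k*x) x) * indicator {0..b n} x \<partial>lborel)"
      by (rule nn_integral_substitution_aux)
         (use k in \<open>auto intro!: derivative_eq_intros continuous_intros simp: b_def\<close>)
    then show ?thesis by simp
  qed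
  then have "(SUP n. \<integral>\<^sup>+x. Q (k * x\<^sup>2) * ennreal (2*k*x) * indicator {0..b n} x \<partial>lborel)
      = (SUP n. \<integral>\<^sup>+t. Q t * indicator {0..k * (b n)\<^sup>2} t \<partial>lborel)"
    by simp
  then show ?thesis
    using mono by (subst (asm) (1 2) nn_integral_indicator_incseq_UN[symmetric])
      (simp_all add: UN incseq_atLeastAtMost)
qed

lemma nn_integral_substitution_Ici:
  fixes f :: "real \<Rightarrow> ennreal" and g g' :: "real \<Rightarrow> real"
  assumes [measurable]: "f \<in> borel_measurable borel" "g \<in> borel_measurable borel" "g' \<in> borel_measurable borel"
    and deriv: "\<And>x. x \<ge> a \<Longrightarrow> (g has_real_derivative g' x) (at x)"
    and cont: "continuous_on {a..} g'" and nonneg: "\<And>x. x \<ge> a \<Longrightarrow> g' x \<ge> 0"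
    and lim: "(g \<longlongrightarrow> L) at_top" and below: "\<And>x. x \<ge> a \<Longrightarrow> g x < L"
  shows "(\<integral>\<^sup>+y. f y * indicator {g a..<L} y \<partial>lborel) = (\<integral>\<^sup>+x. f (g x) * ennreal (g' x) * indicator {a..} x \<partial>lborel)"
proof -
  define b where "b n = a + 1 + real n" for n
  have mono_g: "g x \<le> g y" if "a \<le> x" "x \<le> y" for x y
    using deriv_nonneg_imp_mono[of x y g g'] deriv nonneg that by auto
  have b: "mono b" "\<And>n. a < b n" unfolding b_def mono_def by auto
  have "\<exists>n. x \<le> b n" for x
    using real_arch_simple[of "x - a"] unfolding b_def by (metis add.commute diff_le_eq le_add_same_cancel2 order.trans zero_le_one)
  then have UN_dom: "(\<Union>n. {a..b n}) = {a..}" by (rule UN_atLeastAtMost_unbounded)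
  have UN_rng: "(\<Union>n. {g a..g (b n)}) = {g a..<L}"
  proof (intro equalityI subsetI)
    fix y assume "y \<in> (\<Union>n. {g a..g (b n)})"
    then obtain n where "g a \<le> y" "y \<le> g (b n)" by auto
    moreover have "g (b n) < L" using below b(2)[of n] by simp
    ultimately show "y \<in> {g a..<L}" by simp
  next
    fix y assume y: "y \<in> {g a..<L}"
    then have "eventually (\<lambda>x. y < g x \<and> a \<le> x) at_top"
      using order_tendstoD(1)[OF lim] eventually_ge_at_top by (auto intro: eventually_conj)
    then obtain x where "\<And>z. z \<ge> x \<Longrightarrow> y < g z \<and> a \<le> z"
      by (auto simp: eventually_at_top_linorder)
    then have x: "y < g x" "a \<le> x" by auto
    obtain n where "x \<le> b n" using \<open>\<And>x. \<exists>n. x \<le> b n\<close> by blast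
    then have "y \<le> g (b n)" using x mono_g[of x "b n"] by simp
    then show "y \<in> (\<Union>n. {g a..g (b n)})" using y by auto
  qed
  have inc: "incseq (\<lambda>n. {g a..g (b n)})"
    using b by (intro incseq_atLeastAtMost) (simp add: mono_def mono_g less_imp_le)
  have step: "(\<integral>\<^sup>+y. f y * indicator {g a..g (b n)} y \<partial>lborel)
      = (\<integral>\<^sup>+x. f (g x) * ennreal (g' x) * indicator {a..b n} x \<partial>lborel)" for n
    using b(2) deriv nonneg by (intro nn_integral_substitution_aux continuous_on_subset[OF cont]) auto
  have "(\<integral>\<^sup>+y. f y * indicator {g a..<L} y \<partial>lborel) = (SUP n. \<integral>\<^sup>+y. f y * indicator {g a..g (b n)} y \<partial>lborel)"
    unfolding UN_rng[symmetric] by (rule nn_integral_indicator_incseq_UN[OF inc]) auto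
  also have "\<dots> = (SUP n. \<integral>\<^sup>+x. f (g x) * ennreal (g' x) * indicator {a..b n} x \<partial>lborel)"
    by (simp only: step)
  also have "\<dots> = (\<integral>\<^sup>+x. f (g x) * ennreal (g' x) * indicator {a..} x \<partial>lborel)"
    unfolding UN_dom[symmetric] using b(1)
    by (intro nn_integral_indicator_incseq_UN[symmetric] incseq_atLeastAtMost) auto
  finally show ?thesis .
qed

lemma nn_integral_abs_square_subst:
  fixes Q :: "real \<Rightarrow> ennreal"
  assumes [measurable]: "Q \<in> borel_measurable borel" and k: "k > 0"
  shows "(\<integral>\<^sup>+x. ennreal \<bar>x\<bar> * Q (k * x\<^sup>2) \<partial>lborel) = ennreal (1/k) * (\<integral>\<^sup>+t. Q t * indicator {0..} t \<partial>lborel)"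
proof -
  define P where "P = (\<integral>\<^sup>+x. ennreal x * Q (k * x\<^sup>2) * indicator {0..} x \<partial>lborel)"
  have split: "ennreal \<bar>x\<bar> * Q (k * x\<^sup>2) = ennreal \<bar>x\<bar> * Q (k * x\<^sup>2) * indicator {0..} x + ennreal \<bar>x\<bar> * Q (k * x\<^sup>2) * indicator {..<0} x" for x
    by (auto simp: indicator_def)
  have "(\<integral>\<^sup>+x. ennreal \<bar>x\<bar> * Q (k * x\<^sup>2) \<partial>lborel) =
     (\<integral>\<^sup>+x. ennreal \<bar>x\<bar> * Q (k * x\<^sup>2) * indicator {0..} x \<partial>lborel) + (\<integral>\<^sup>+x. ennreal \<bar>x\<bar> * Q (k * x\<^sup>2) * indicator {..<0} x \<partial>lborel)"
    by (subst split) (rule nn_integral_add; measurable)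
  also have "(\<integral>\<^sup>+x. ennreal \<bar>x\<bar> * Q (k * x\<^sup>2) * indicator {0..} x \<partial>lborel) = P"
    unfolding P_def by (intro nn_integral_cong) (auto simp: indicator_def)
  also have "(\<integral>\<^sup>+x. ennreal \<bar>x\<bar> * Q (k * x\<^sup>2) * indicator {..<0} x \<partial>lborel) =
      (\<integral>\<^sup>+x. ennreal \<bar>-x\<bar> * Q (k * (-x)\<^sup>2) * indicator {..<0} (-x) \<partial>lborel)"
    using nn_integral_real_affine[where f="\<lambda>x. ennreal \<bar>x\<bar> * Q (k * x\<^sup>2) * indicator {..<0} x" and c="-1" and t=0]
    by simp
  also have "\<dots> = P"
    unfolding P_def by (intro nn_integral_cong) (auto simp: indicator_def)
  finally have lhs: "(\<integral>\<^sup>+x. ennreal \<bar>x\<bar> * Q (k * x\<^sup>2) \<partial>lborel) = 2 * P" by (simp add: mult_2)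
  have "(\<integral>\<^sup>+t. Q t * indicator {0..} t \<partial>lborel) = (\<integral>\<^sup>+x. ennreal (2*k) * (ennreal x * Q (k * x\<^sup>2) * indicator {0..} x) \<partial>lborel)"
    unfolding nn_integral_square_subst[OF assms, symmetric]
    using k by (intro nn_integral_cong) (auto simp: indicator_def ennreal_mult' mult_ac)
  also have "\<dots> = ennreal (2*k) * P" unfolding P_def by (rule nn_integral_cmult) measurable
  finally have "ennreal (1/k) * (\<integral>\<^sup>+t. Q t * indicator {0..} t \<partial>lborel) = ennreal (1/k) * ennreal (2*k) * P"
    by (simp add: mult.assoc)
  also have "ennreal (1/k) * ennreal (2*k) = 2" using k by (simp add: ennreal_mult[symmetric])
  finally show ?thesis using lhs by simp
qed

section \<open>The Gaussian \<open>N(0, 1/2)\<close>\<close>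

text \<open>\<open>N(0, 1/2)\<close> is the law of the real and imaginary parts of a standard circularly-symmetric
  complex Gaussian.\<close>

definition gauss :: "real \<Rightarrow> real" where "gauss x = exp (-(x\<^sup>2)) / sqrt pi"

lemma gauss_nonneg [simp]: "0 \<le> gauss x" by (simp add: gauss_def)

lemma gauss_measurable [measurable]: "gauss \<in> borel_measurable borel"
  unfolding gauss_def by measurable

lemma normal_density_half_eq_gauss: "normal_density 0 (sqrt (1/2)) = gauss"
  by (rule ext) (simp add: normal_density_def gauss_def)

lemma gauss_mult: "gauss a * gauss b = exp (-(a\<^sup>2 + b\<^sup>2)) / pi"
  by (simp add: gauss_def exp_add[symmetric])

lemma gauss_mult_rotation: "c\<^sup>2 + d\<^sup>2 = 1 \<Longrightarrow> gauss (c*x + d*y) * gauss (-d*x + c*y) = gauss x * gauss y"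
proof -
  assume cd: "c\<^sup>2 + d\<^sup>2 = 1"
  have "(c*x + d*y)\<^sup>2 + (-d*x + c*y)\<^sup>2 = (c\<^sup>2 + d\<^sup>2) * (x\<^sup>2 + y\<^sup>2)" by (simp add: power2_eq_square algebra_simps)
  then show ?thesis using cd by (simp only: gauss_mult) simp
qed

lemma nn_integral_gauss: "(\<integral>\<^sup>+x. ennreal (gauss x) \<partial>lborel) = 1"
  by (subst nn_integral_eq_integral) (auto simp: normal_density_half_eq_gauss[symmetric])

lemma nn_integral_exp_neg_Ici: "(\<integral>\<^sup>+t. ennreal (exp (-t)) * indicator {0..} t \<partial>lborel) = 1"
  using nn_intergal_power_times_exp_Ici[of 0] by simp

text \<open>Integrating first along lines through the origin gives the radial law up to the
  factor \<open>\<integral> 1 / (\<pi> (1 + u\<^sup>2)) du\<close>, which then must be \<open>1\<close> by taking \<open>H = 1\<close>.\<close>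

lemma nn_integral_gauss2_radial_aux:
  fixes H :: "real \<Rightarrow> ennreal"
  assumes [measurable]: "H \<in> borel_measurable borel"
  shows "(\<integral>\<^sup>+x. \<integral>\<^sup>+y. ennreal (gauss x * gauss y) * H (x\<^sup>2 + y\<^sup>2) \<partial>lborel \<partial>lborel)
    = (\<integral>\<^sup>+u. ennreal (1 / (pi * (1 + u\<^sup>2))) \<partial>lborel) * (\<integral>\<^sup>+t. ennreal (exp (-t)) * H t * indicator {0..} t \<partial>lborel)"
proof -
  define Q where "Q = (\<lambda>t. ennreal (exp (-t)) * H t)"
  have Qm[measurable]: "Q \<in> borel_measurable borel" unfolding Q_def by measurable
  define J where "J = (\<integral>\<^sup>+t. Q t * indicator {0..} t \<partial>lborel)"
  have inner: "(\<integral>\<^sup>+y. ennreal (gauss x * gauss y) * H (x\<^sup>2 + y\<^sup>2) \<partial>lborel)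
      = (\<integral>\<^sup>+u. ennreal (1/pi) * (ennreal \<bar>x\<bar> * Q ((1 + u\<^sup>2) * x\<^sup>2)) \<partial>lborel)" if x: "x \<noteq> 0" for x
  proof -
    have "(\<integral>\<^sup>+y. ennreal (gauss x * gauss y) * H (x\<^sup>2 + y\<^sup>2) \<partial>lborel)
       = ennreal \<bar>x\<bar> * (\<integral>\<^sup>+u. ennreal (gauss x * gauss (0 + x*u)) * H (x\<^sup>2 + (0 + x*u)\<^sup>2) \<partial>lborel)"
      by (rule nn_integral_real_affine[OF _ x]) measurable
    also have "\<dots> = (\<integral>\<^sup>+u. ennreal \<bar>x\<bar> * (ennreal (gauss x * gauss (0 + x*u)) * H (x\<^sup>2 + (0 + x*u)\<^sup>2)) \<partial>lborel)"
      by (rule nn_integral_cmult[symmetric]) measurable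
    also have "\<dots> = (\<integral>\<^sup>+u. ennreal (1/pi) * (ennreal \<bar>x\<bar> * Q ((1 + u\<^sup>2) * x\<^sup>2)) \<partial>lborel)"
    proof (rule nn_integral_cong)
      fix u
      have e: "x\<^sup>2 + (0 + x*u)\<^sup>2 = (1 + u\<^sup>2) * x\<^sup>2" by (simp add: power2_eq_square algebra_simps)
      have "ennreal (gauss x * gauss (0 + x*u)) = ennreal (1/pi) * ennreal (exp (-((1 + u\<^sup>2) * x\<^sup>2)))"
        unfolding gauss_mult e by (simp add: ennreal_mult[symmetric])
      then show "ennreal \<bar>x\<bar> * (ennreal (gauss x * gauss (0 + x*u)) * H (x\<^sup>2 + (0 + x*u)\<^sup>2)) = ennreal (1/pi) * (ennreal \<bar>x\<bar> * Q ((1 + u\<^sup>2) * x\<^sup>2))"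
        unfolding Q_def e by (simp only: mult_ac)
    qed
    finally show ?thesis .
  qed
  have "(\<integral>\<^sup>+x. \<integral>\<^sup>+y. ennreal (gauss x * gauss y) * H (x\<^sup>2 + y\<^sup>2) \<partial>lborel \<partial>lborel)
      = (\<integral>\<^sup>+x. \<integral>\<^sup>+u. ennreal (1/pi) * (ennreal \<bar>x\<bar> * Q ((1 + u\<^sup>2) * x\<^sup>2)) \<partial>lborel \<partial>lborel)"
    by (rule nn_integral_cong_AE) (use AE_lborel_singleton[of 0] inner in \<open>auto elim!: eventually_mono\<close>)
  also have "\<dots> = (\<integral>\<^sup>+u. \<integral>\<^sup>+x. ennreal (1/pi) * (ennreal \<bar>x\<bar> * Q ((1 + u\<^sup>2) * x\<^sup>2)) \<partial>lborel \<partial>lborel)"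
    by (rule lborel_pair.Fubini'[symmetric]) measurable
  also have "\<dots> = (\<integral>\<^sup>+u. ennreal (1 / (pi * (1 + u\<^sup>2))) * J \<partial>lborel)"
  proof (rule nn_integral_cong)
    fix u :: real
    have k: "1 + u\<^sup>2 > 0" by (simp add: add_pos_nonneg)
    have "(\<integral>\<^sup>+x. ennreal (1/pi) * (ennreal \<bar>x\<bar> * Q ((1 + u\<^sup>2) * x\<^sup>2)) \<partial>lborel)
        = ennreal (1/pi) * (ennreal (1/(1 + u\<^sup>2)) * J)"
      unfolding J_def nn_integral_abs_square_subst[OF Qm k, symmetric] by (rule nn_integral_cmult) measurable
    also have "\<dots> = ennreal (1 / (pi * (1 + u\<^sup>2))) * J"
      using k by (simp add: ennreal_mult'[symmetric] mult.assoc[symmetric])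
    finally show "(\<integral>\<^sup>+x. ennreal (1/pi) * (ennreal \<bar>x\<bar> * Q ((1 + u\<^sup>2) * x\<^sup>2)) \<partial>lborel) = ennreal (1 / (pi * (1 + u\<^sup>2))) * J" .
  qed
  also have "\<dots> = (\<integral>\<^sup>+u. ennreal (1 / (pi * (1 + u\<^sup>2))) \<partial>lborel) * J"
    by (rule nn_integral_multc) measurable
  finally show ?thesis unfolding J_def Q_def .
qed

lemma nn_integral_gauss2_radial:
  fixes H :: "real \<Rightarrow> ennreal"
  assumes [measurable]: "H \<in> borel_measurable borel"
  shows "(\<integral>\<^sup>+x. \<integral>\<^sup>+y. ennreal (gauss x * gauss y) * H (x\<^sup>2 + y\<^sup>2) \<partial>lborel \<partial>lborel)
    = (\<integral>\<^sup>+t. ennreal (exp (-t)) * H t * indicator {0..} t \<partial>lborel)"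
proof -
  have "(\<integral>\<^sup>+x. \<integral>\<^sup>+y. ennreal (gauss x * gauss y) \<partial>lborel \<partial>lborel)
      = (\<integral>\<^sup>+x. ennreal (gauss x) * (\<integral>\<^sup>+y. ennreal (gauss y) \<partial>lborel) \<partial>lborel)"
    by (intro nn_integral_cong) (simp add: ennreal_mult nn_integral_cmult[symmetric])
  then have "(\<integral>\<^sup>+x. \<integral>\<^sup>+y. ennreal (gauss x * gauss y) \<partial>lborel \<partial>lborel) = 1"
    by (simp add: nn_integral_gauss)
  then have "(\<integral>\<^sup>+u. ennreal (1 / (pi * (1 + u\<^sup>2))) \<partial>lborel) = 1"
    using nn_integral_gauss2_radial_aux[of "\<lambda>_. 1"] nn_integral_exp_neg_Ici by simp
  then show ?thesis using nn_integral_gauss2_radial_aux[OF assms] by simp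
qed

definition Gauss :: "real measure" where "Gauss = density lborel (\<lambda>x. ennreal (gauss x))"

lemma sets_Gauss [measurable_cong, simp]: "sets Gauss = sets borel"
  unfolding Gauss_def by simp

lemma space_Gauss [simp]: "space Gauss = UNIV"
  unfolding Gauss_def by simp

lemma prob_space_Gauss: "prob_space Gauss"
  unfolding Gauss_def normal_density_half_eq_gauss[symmetric] by (rule prob_space_normal_density) simp

interpretation Gauss: prob_space Gauss by (rule prob_space_Gauss)
interpretation Gauss2: pair_prob_space Gauss Gauss by standard

lemma emeasure_Gauss_UNIV [simp]: "emeasure Gauss UNIV = 1"
  using Gauss.emeasure_space_1 by simp

lemma nn_integral_Gauss_swap:
  fixes f :: "real \<Rightarrow> real \<Rightarrow> ennreal"
  assumes "(\<lambda>(x,y). f x y) \<in> borel_measurable (borel \<Otimes>\<^sub>M borel)"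
  shows "(\<integral>\<^sup>+x. \<integral>\<^sup>+y. f x y \<partial>Gauss \<partial>Gauss) = (\<integral>\<^sup>+y. \<integral>\<^sup>+x. f x y \<partial>Gauss \<partial>Gauss)"
proof -
  have "(\<lambda>(x,y). f x y) \<in> borel_measurable (Gauss \<Otimes>\<^sub>M Gauss)"
    using assms by (simp cong: measurable_cong_sets)
  then show ?thesis using Gauss2.Fubini'[of f] by simp
qed

lemma nn_integral_Gauss2_eq_lborel:
  fixes F :: "real \<times> real \<Rightarrow> ennreal"
  assumes [measurable]: "F \<in> borel_measurable (borel \<Otimes>\<^sub>M borel)"
  shows "(\<integral>\<^sup>+x. \<integral>\<^sup>+y. F (x, y) \<partial>Gauss \<partial>Gauss) = (\<integral>\<^sup>+x. \<integral>\<^sup>+y. ennreal (gauss x * gauss y) * F (x, y) \<partial>lborel \<partial>lborel)"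
  unfolding Gauss_def
  by (simp add: nn_integral_density nn_integral_cmult[symmetric] ennreal_mult mult.assoc)

lemma nn_integral_Gauss2_rotation:
  fixes F :: "real \<times> real \<Rightarrow> ennreal"
  assumes [measurable]: "F \<in> borel_measurable (borel \<Otimes>\<^sub>M borel)" and cd: "c\<^sup>2 + d\<^sup>2 = 1"
  shows "(\<integral>\<^sup>+x. \<integral>\<^sup>+y. F (c*x + d*y, -d*x + c*y) \<partial>Gauss \<partial>Gauss) = (\<integral>\<^sup>+x. \<integral>\<^sup>+y. F (x, y) \<partial>Gauss \<partial>Gauss)"
proof -
  define G where "G = (\<lambda>p. ennreal (gauss (fst p) * gauss (snd p)) * F p)"
  have "G \<in> borel_measurable (borel \<Otimes>\<^sub>M borel)" unfolding G_def by measurable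
  then have [measurable]: "G \<in> borel_measurable borel" by (simp add: borel_prod)
  have "(\<integral>\<^sup>+x. \<integral>\<^sup>+y. F (c*x + d*y, -d*x + c*y) \<partial>Gauss \<partial>Gauss)
      = (\<integral>\<^sup>+x. \<integral>\<^sup>+y. G (c*x + d*y, -d*x + c*y) \<partial>lborel \<partial>lborel)"
    unfolding G_def fst_conv snd_conv gauss_mult_rotation[OF cd]
    by (rule nn_integral_Gauss2_eq_lborel[where F="\<lambda>p. F (c * fst p + d * snd p, -d * fst p + c * snd p)",
          unfolded fst_conv snd_conv]) measurable
  also have "\<dots> = (\<integral>\<^sup>+x. \<integral>\<^sup>+y. G (x, y) \<partial>lborel \<partial>lborel)"
    by (rule nn_integral_lborel2_rotation) (simp_all add: cd)
  also have "\<dots> = (\<integral>\<^sup>+x. \<integral>\<^sup>+y. F (x, y) \<partial>Gauss \<partial>Gauss)"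
    unfolding G_def by (simp add: nn_integral_Gauss2_eq_lborel)
  finally show ?thesis .
qed

lemma nn_integral_Gauss2_radial:
  fixes H :: "real \<Rightarrow> ennreal"
  assumes [measurable]: "H \<in> borel_measurable borel"
  shows "(\<integral>\<^sup>+x. \<integral>\<^sup>+y. H (x\<^sup>2 + y\<^sup>2) \<partial>Gauss \<partial>Gauss) = (\<integral>\<^sup>+t. ennreal (exp (-t)) * H t * indicator {0..} t \<partial>lborel)"
  using nn_integral_Gauss2_eq_lborel[of "\<lambda>p. H ((fst p)\<^sup>2 + (snd p)\<^sup>2)"] nn_integral_gauss2_radial[OF assms]
  by simp

lemma real_polar_decomp:
  fixes p q :: real
  obtains r c d where "r \<ge> 0" "c\<^sup>2 + d\<^sup>2 = 1" "p = r * c" "q = r * d" "r\<^sup>2 = p\<^sup>2 + q\<^sup>2"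
proof (cases "p\<^sup>2 + q\<^sup>2 = 0")
  case True
  then have "p = 0" "q = 0" by (auto simp: add_nonneg_eq_0_iff)
  then show ?thesis by (intro that[of 0 1 0]) auto
next
  case False
  define r where "r = sqrt (p\<^sup>2 + q\<^sup>2)"
  have r0: "r > 0" and r2: "r\<^sup>2 = p\<^sup>2 + q\<^sup>2"
    using False unfolding r_def by (simp_all add: add_nonneg_nonneg order_le_neq_trans)
  show ?thesis
  proof (rule that[of r "p/r" "q/r"])
    show "(p/r)\<^sup>2 + (q/r)\<^sup>2 = 1" using r0 by (simp add: power_divide add_divide_distrib[symmetric] r2[symmetric])
  qed (use r0 r2 in simp_all)
qed

text \<open>With \<open>h = (a\<^sub>1 + i b\<^sub>1, a\<^sub>2 + i b\<^sub>2)\<close> and \<open>w = (p\<^sub>1 + i q\<^sub>1, p\<^sub>2 + i q\<^sub>2)\<close>, the argument of \<open>\<Phi>\<close>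
  below is \<open>|w\<^sup>H h|\<^sup>2\<close>: for a standard complex Gaussian \<open>h\<close> it is \<open>\<parallel>w\<parallel>\<^sup>2\<close> times an \<open>Exp(1)\<close>
  variable. Unitary invariance reduces \<open>w\<close> to \<open>(\<parallel>w\<parallel>, 0)\<close> through three plane rotations.\<close>

lemma nn_integral_Gauss4_inner_product:
  fixes \<Phi> :: "real \<Rightarrow> ennreal"
  assumes [measurable]: "\<Phi> \<in> borel_measurable borel"
  shows "(\<integral>\<^sup>+a1. \<integral>\<^sup>+b1. \<integral>\<^sup>+a2. \<integral>\<^sup>+b2. \<Phi> ((a1*p1 + b1*q1 + a2*p2 + b2*q2)\<^sup>2 + (a1*q1 - b1*p1 + a2*q2 - b2*p2)\<^sup>2)
        \<partial>Gauss \<partial>Gauss \<partial>Gauss \<partial>Gauss)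
     = (\<integral>\<^sup>+t. ennreal (exp (-t)) * \<Phi> ((p1\<^sup>2 + q1\<^sup>2 + p2\<^sup>2 + q2\<^sup>2) * t) * indicator {0..} t \<partial>lborel)"
proof -
  obtain r1 c1 d1 where P1: "c1\<^sup>2 + d1\<^sup>2 = 1" "p1 = r1 * c1" "q1 = r1 * d1" "r1\<^sup>2 = p1\<^sup>2 + q1\<^sup>2"
    by (rule real_polar_decomp)
  obtain r2 c2 d2 where P2: "c2\<^sup>2 + d2\<^sup>2 = 1" "p2 = r2 * c2" "q2 = r2 * d2" "r2\<^sup>2 = p2\<^sup>2 + q2\<^sup>2"
    by (rule real_polar_decomp)
  obtain r c d where P: "c\<^sup>2 + d\<^sup>2 = 1" "r1 = r * c" "r2 = r * d" "r\<^sup>2 = r1\<^sup>2 + r2\<^sup>2"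
    by (rule real_polar_decomp)
  define \<Psi> where "\<Psi> = (\<lambda>x1 y1 x2 y2. \<Phi> ((r1*x1 + r2*x2)\<^sup>2 + (r1*y1 + r2*y2)\<^sup>2))"
  have [measurable]: "(\<lambda>x. \<Psi> (f1 x) (f2 x) (f3 x) (f4 x)) \<in> borel_measurable M"
    if [measurable]: "f1 \<in> borel_measurable M" "f2 \<in> borel_measurable M" "f3 \<in> borel_measurable M"
      "f4 \<in> borel_measurable M" for M f1 f2 f3 f4
    unfolding \<Psi>_def by measurable
  have "\<Phi> ((a1*p1 + b1*q1 + a2*p2 + b2*q2)\<^sup>2 + (a1*q1 - b1*p1 + a2*q2 - b2*p2)\<^sup>2)
      = \<Psi> (c1*a1 + d1*b1) (-d1*a1 + c1*b1) (c2*a2 + d2*b2) (-d2*a2 + c2*b2)" for a1 b1 a2 b2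
  proof -
    have "(a1*q1 - b1*p1 + a2*q2 - b2*p2)\<^sup>2 = (r1*(-d1*a1 + c1*b1) + r2*(-d2*a2 + c2*b2))\<^sup>2"
      unfolding P1(2,3) P2(2,3) by (simp add: power2_eq_square algebra_simps)
    moreover have "a1*p1 + b1*q1 + a2*p2 + b2*q2 = r1*(c1*a1 + d1*b1) + r2*(c2*a2 + d2*b2)"
      unfolding P1(2,3) P2(2,3) by (simp add: algebra_simps)
    ultimately show ?thesis unfolding \<Psi>_def by simp
  qed
  then have "(\<integral>\<^sup>+a1. \<integral>\<^sup>+b1. \<integral>\<^sup>+a2. \<integral>\<^sup>+b2. \<Phi> ((a1*p1 + b1*q1 + a2*p2 + b2*q2)\<^sup>2 + (a1*q1 - b1*p1 + a2*q2 - b2*p2)\<^sup>2)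
        \<partial>Gauss \<partial>Gauss \<partial>Gauss \<partial>Gauss)
     = (\<integral>\<^sup>+a1. \<integral>\<^sup>+b1. \<integral>\<^sup>+a2. \<integral>\<^sup>+b2. \<Psi> (c1*a1 + d1*b1) (-d1*a1 + c1*b1) (c2*a2 + d2*b2) (-d2*a2 + c2*b2)
        \<partial>Gauss \<partial>Gauss \<partial>Gauss \<partial>Gauss)"
    by simp
  also have "\<dots> = (\<integral>\<^sup>+a1. \<integral>\<^sup>+b1. \<integral>\<^sup>+a2. \<integral>\<^sup>+b2. \<Psi> (c1*a1 + d1*b1) (-d1*a1 + c1*b1) a2 b2 \<partial>Gauss \<partial>Gauss \<partial>Gauss \<partial>Gauss)"
  proof -
    have "(\<lambda>p. \<Psi> x y (fst p) (snd p)) \<in> borel_measurable (borel \<Otimes>\<^sub>M borel)" for x y by measurable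
    from nn_integral_Gauss2_rotation[OF this P2(1)] show ?thesis by simp
  qed
  also have "\<dots> = (\<integral>\<^sup>+a1. \<integral>\<^sup>+b1. \<integral>\<^sup>+a2. \<integral>\<^sup>+b2. \<Psi> a1 b1 a2 b2 \<partial>Gauss \<partial>Gauss \<partial>Gauss \<partial>Gauss)"
    using nn_integral_Gauss2_rotation[OF _ P1(1), where F="\<lambda>p. \<integral>\<^sup>+a2. \<integral>\<^sup>+b2. \<Psi> (fst p) (snd p) a2 b2 \<partial>Gauss \<partial>Gauss"]
    by simp
  also have "\<dots> = (\<integral>\<^sup>+a1. \<integral>\<^sup>+a2. \<integral>\<^sup>+b1. \<integral>\<^sup>+b2. \<Psi> a1 b1 a2 b2 \<partial>Gauss \<partial>Gauss \<partial>Gauss \<partial>Gauss)"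
    by (intro nn_integral_cong nn_integral_Gauss_swap) measurable
  also have "\<dots> = (\<integral>\<^sup>+a1. \<integral>\<^sup>+a2. \<integral>\<^sup>+b1. \<integral>\<^sup>+b2. \<Phi> ((r1*a1 + r2*a2)\<^sup>2 + (r * (c*b1 + d*b2))\<^sup>2) \<partial>Gauss \<partial>Gauss \<partial>Gauss \<partial>Gauss)"
    unfolding \<Psi>_def P(2,3) by (simp add: algebra_simps)
  also have "\<dots> = (\<integral>\<^sup>+a1. \<integral>\<^sup>+a2. \<integral>\<^sup>+b1. \<integral>\<^sup>+b2. \<Phi> ((r1*a1 + r2*a2)\<^sup>2 + (r * b1)\<^sup>2) \<partial>Gauss \<partial>Gauss \<partial>Gauss \<partial>Gauss)"
  proof -
    have "(\<lambda>p. \<Phi> ((r1*x + r2*y)\<^sup>2 + (r * fst p)\<^sup>2)) \<in> borel_measurable (borel \<Otimes>\<^sub>M borel)" for x y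
      by measurable
    from nn_integral_Gauss2_rotation[OF this P(1)] show ?thesis by simp
  qed
  also have "\<dots> = (\<integral>\<^sup>+a1. \<integral>\<^sup>+a2. \<integral>\<^sup>+b1. \<integral>\<^sup>+b2. \<Phi> ((r * (c*a1 + d*a2))\<^sup>2 + (r * b1)\<^sup>2) \<partial>Gauss \<partial>Gauss \<partial>Gauss \<partial>Gauss)"
    unfolding P(2,3) by (simp add: algebra_simps)
  also have "\<dots> = (\<integral>\<^sup>+a1. \<integral>\<^sup>+a2. \<integral>\<^sup>+b1. \<integral>\<^sup>+b2. \<Phi> ((r * a1)\<^sup>2 + (r * b1)\<^sup>2) \<partial>Gauss \<partial>Gauss \<partial>Gauss \<partial>Gauss)"
    using nn_integral_Gauss2_rotation[OF _ P(1), where F="\<lambda>p. \<integral>\<^sup>+b1. \<integral>\<^sup>+b2. \<Phi> ((r * fst p)\<^sup>2 + (r * b1)\<^sup>2) \<partial>Gauss \<partial>Gauss"]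
    by simp
  also have "\<dots> = (\<integral>\<^sup>+a1. \<integral>\<^sup>+b1. \<Phi> (r\<^sup>2 * (a1\<^sup>2 + b1\<^sup>2)) \<partial>Gauss \<partial>Gauss)"
    by (simp add: power_mult_distrib distrib_left)
  also have "\<dots> = (\<integral>\<^sup>+t. ennreal (exp (-t)) * \<Phi> (r\<^sup>2 * t) * indicator {0..} t \<partial>lborel)"
    by (rule nn_integral_Gauss2_radial[of "\<lambda>t. \<Phi> (r\<^sup>2 * t)"]) measurable
  also have "r\<^sup>2 = p1\<^sup>2 + q1\<^sup>2 + p2\<^sup>2 + q2\<^sup>2" using P(4) P1(4) P2(4) by simp
  finally show ?thesis .
qed

text \<open>For \<open>y = (c\<^sub>1 + i d\<^sub>1, c\<^sub>2 + i d\<^sub>2)\<close> standard complex Gaussian, \<open>t = |y\<^sub>1 + y\<^sub>2|\<^sup>2/2\<close> and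
  \<open>u = |y\<^sub>1 - y\<^sub>2|\<^sup>2/2\<close> are independent \<open>Exp(1)\<close> variables with \<open>\<parallel>y\<parallel>\<^sup>2 = t + u\<close> and
  \<open>Re (y\<^sub>1 y\<^sub>2\<^sup>*) = (t - u)/2\<close>.\<close>

lemma nn_integral_Gauss4_sum_difference:
  fixes \<Xi> :: "real \<Rightarrow> real \<Rightarrow> ennreal"
  assumes \<Xi>_measurable: "(\<lambda>(x,y). \<Xi> x y) \<in> borel_measurable (borel \<Otimes>\<^sub>M borel)"
  shows "(\<integral>\<^sup>+c1. \<integral>\<^sup>+d1. \<integral>\<^sup>+c2. \<integral>\<^sup>+d2. \<Xi> (c1\<^sup>2 + d1\<^sup>2 + c2\<^sup>2 + d2\<^sup>2) (c1*c2 + d1*d2) \<partial>Gauss \<partial>Gauss \<partial>Gauss \<partial>Gauss)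
     = (\<integral>\<^sup>+t. ennreal (exp (-t)) * (\<integral>\<^sup>+u. ennreal (exp (-u)) * \<Xi> (t + u) ((t - u)/2) * indicator {0..} u \<partial>lborel)
          * indicator {0..} t \<partial>lborel)"
proof -
  have [measurable]: "(\<lambda>x. \<Xi> (f x) (g x)) \<in> borel_measurable M"
    if [measurable]: "f \<in> borel_measurable M" "g \<in> borel_measurable M" for M and f g :: "'a \<Rightarrow> real"
    using measurable_compose[OF _ \<Xi>_measurable, of "\<lambda>x. (f x, g x)"] by simp
  define k :: real where "k = 1 / sqrt 2"
  have kk: "k\<^sup>2 + k\<^sup>2 = 1" and k2: "k * k = 1/2"
    unfolding k_def by (simp_all add: power2_eq_square[symmetric] power_divide)
  define F where "F = (\<lambda>e f e' f'. \<Xi> (e\<^sup>2 + f\<^sup>2 + e'\<^sup>2 + f'\<^sup>2) ((e\<^sup>2 - f\<^sup>2 + e'\<^sup>2 - f'\<^sup>2)/2))"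
  have [measurable]: "(\<lambda>x. F (f1 x) (f2 x) (f3 x) (f4 x)) \<in> borel_measurable M"
    if [measurable]: "f1 \<in> borel_measurable M" "f2 \<in> borel_measurable M" "f3 \<in> borel_measurable M"
      "f4 \<in> borel_measurable M" for M f1 f2 f3 f4
    unfolding F_def by measurable
  have "\<Xi> (c1\<^sup>2 + d1\<^sup>2 + c2\<^sup>2 + d2\<^sup>2) (c1*c2 + d1*d2) = F (k*c1 + k*c2) (-k*c1 + k*c2) (k*d1 + k*d2) (-k*d1 + k*d2)"
    for c1 d1 c2 d2
  proof -
    have "(k*c1 + k*c2)\<^sup>2 + (-k*c1 + k*c2)\<^sup>2 + (k*d1 + k*d2)\<^sup>2 + (-k*d1 + k*d2)\<^sup>2 = 2*(k*k)*(c1\<^sup>2 + d1\<^sup>2 + c2\<^sup>2 + d2\<^sup>2)"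
      "(k*c1 + k*c2)\<^sup>2 - (-k*c1 + k*c2)\<^sup>2 + (k*d1 + k*d2)\<^sup>2 - (-k*d1 + k*d2)\<^sup>2 = 4*(k*k)*(c1*c2 + d1*d2)"
      by (simp_all add: power2_eq_square algebra_simps)
    then show ?thesis unfolding F_def k2 by (simp add: add_divide_distrib)
  qed
  then have "(\<integral>\<^sup>+c1. \<integral>\<^sup>+d1. \<integral>\<^sup>+c2. \<integral>\<^sup>+d2. \<Xi> (c1\<^sup>2 + d1\<^sup>2 + c2\<^sup>2 + d2\<^sup>2) (c1*c2 + d1*d2) \<partial>Gauss \<partial>Gauss \<partial>Gauss \<partial>Gauss)
     = (\<integral>\<^sup>+c1. \<integral>\<^sup>+c2. \<integral>\<^sup>+d1. \<integral>\<^sup>+d2. F (k*c1 + k*c2) (-k*c1 + k*c2) (k*d1 + k*d2) (-k*d1 + k*d2)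
          \<partial>Gauss \<partial>Gauss \<partial>Gauss \<partial>Gauss)"
    by (simp only:) (intro nn_integral_cong nn_integral_Gauss_swap, measurable)
  also have "\<dots> = (\<integral>\<^sup>+c1. \<integral>\<^sup>+c2. \<integral>\<^sup>+d1. \<integral>\<^sup>+d2. F (k*c1 + k*c2) (-k*c1 + k*c2) d1 d2 \<partial>Gauss \<partial>Gauss \<partial>Gauss \<partial>Gauss)"
  proof -
    have "(\<lambda>p. F x y (fst p) (snd p)) \<in> borel_measurable (borel \<Otimes>\<^sub>M borel)" for x y by measurable
    from nn_integral_Gauss2_rotation[OF this kk] show ?thesis by simp
  qed
  also have "\<dots> = (\<integral>\<^sup>+c1. \<integral>\<^sup>+c2. \<integral>\<^sup>+d1. \<integral>\<^sup>+d2. F c1 c2 d1 d2 \<partial>Gauss \<partial>Gauss \<partial>Gauss \<partial>Gauss)"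
    using nn_integral_Gauss2_rotation[OF _ kk, where F="\<lambda>p. \<integral>\<^sup>+d1. \<integral>\<^sup>+d2. F (fst p) (snd p) d1 d2 \<partial>Gauss \<partial>Gauss"]
    by simp
  also have "\<dots> = (\<integral>\<^sup>+c1. \<integral>\<^sup>+d1. \<integral>\<^sup>+c2. \<integral>\<^sup>+d2. F c1 c2 d1 d2 \<partial>Gauss \<partial>Gauss \<partial>Gauss \<partial>Gauss)"
    by (intro nn_integral_cong nn_integral_Gauss_swap) measurable
  also have "\<dots> = (\<integral>\<^sup>+c1. \<integral>\<^sup>+d1. (\<lambda>t. \<integral>\<^sup>+c2. \<integral>\<^sup>+d2. (\<lambda>u. \<Xi> (t + u) ((t - u)/2)) (c2\<^sup>2 + d2\<^sup>2) \<partial>Gauss \<partial>Gauss)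
        (c1\<^sup>2 + d1\<^sup>2) \<partial>Gauss \<partial>Gauss)"
    unfolding F_def by (simp add: algebra_simps diff_divide_distrib add_divide_distrib)
  also have "\<dots> = (\<integral>\<^sup>+t. ennreal (exp (-t)) * (\<lambda>t. \<integral>\<^sup>+c2. \<integral>\<^sup>+d2. (\<lambda>u. \<Xi> (t + u) ((t - u)/2)) (c2\<^sup>2 + d2\<^sup>2)
        \<partial>Gauss \<partial>Gauss) t * indicator {0..} t \<partial>lborel)"
    by (rule nn_integral_Gauss2_radial) measurable
  also have "\<dots> = (\<integral>\<^sup>+t. ennreal (exp (-t)) * (\<integral>\<^sup>+u. ennreal (exp (-u)) * \<Xi> (t + u) ((t - u)/2) * indicator {0..} u \<partial>lborel)
        * indicator {0..} t \<partial>lborel)"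
  proof -
    have "(\<integral>\<^sup>+c2. \<integral>\<^sup>+d2. (\<lambda>u. \<Xi> (t + u) ((t - u)/2)) (c2\<^sup>2 + d2\<^sup>2) \<partial>Gauss \<partial>Gauss)
        = (\<integral>\<^sup>+u. ennreal (exp (-u)) * \<Xi> (t + u) ((t - u)/2) * indicator {0..} u \<partial>lborel)" for t
      by (rule nn_integral_Gauss2_radial) measurable
    then show ?thesis by simp
  qed
  finally show ?thesis .
qed

lemma nn_integral_times_exp_scaled:
  fixes c :: real
  assumes c: "c > 0"
  shows "(\<integral>\<^sup>+u. ennreal (u * exp (-(c * u))) * indicator {0..} u \<partial>lborel) = ennreal (1 / c\<^sup>2)"
proof -
  define I where "I = (\<integral>\<^sup>+u. ennreal (u * exp (-(c * u))) * indicator {0..} u \<partial>lborel)"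
  have "1 = (\<integral>\<^sup>+x. ennreal (x^1 * exp (-x)) * indicator {0..} x \<partial>lborel)"
    using nn_intergal_power_times_exp_Ici[of 1] by simp
  also have "\<dots> = ennreal \<bar>c\<bar> * (\<integral>\<^sup>+u. ennreal ((0 + c*u)^1 * exp (-(0 + c*u))) * indicator {0..} (0 + c*u) \<partial>lborel)"
    by (rule nn_integral_real_affine) (use c in auto)
  also have "(\<integral>\<^sup>+u. ennreal ((0 + c*u)^1 * exp (-(0 + c*u))) * indicator {0..} (0 + c*u) \<partial>lborel)
      = (\<integral>\<^sup>+u. ennreal c * (ennreal (u * exp (-(c * u))) * indicator {0..} u) \<partial>lborel)"
    using c by (intro nn_integral_cong) (auto simp: indicator_def zero_le_mult_iff ennreal_mult[symmetric])
  also have "ennreal \<bar>c\<bar> * \<dots> = ennreal (c * c) * I"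
    unfolding I_def using c by (subst nn_integral_cmult) (auto simp: ennreal_mult mult.assoc)
  finally have "ennreal (c * c) * I = 1" ..
  then have "ennreal (1 / (c * c)) * (ennreal (c * c) * I) = ennreal (1 / (c * c))"
    by simp
  then show ?thesis
    using c unfolding I_def by (simp add: mult.assoc[symmetric] ennreal_mult[symmetric] power2_eq_square)
qed

text \<open>For independent \<open>t, u \<sim> Exp(1)\<close> the ratio \<open>t / u\<close> has density \<open>1 / (1 + z)\<^sup>2\<close> on \<open>[0, \<infinity>)\<close>;
  the hypothesis says that \<open>\<Theta> t u\<close> depends on that ratio only.\<close>

lemma nn_integral_exp_exp_homogeneous:
  fixes \<Theta> :: "real \<Rightarrow> real \<Rightarrow> ennreal"
  assumes \<Theta>_measurable: "(\<lambda>(x,y). \<Theta> x y) \<in> borel_measurable (borel \<Otimes>\<^sub>M borel)"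
    and hom: "\<And>u z. u > 0 \<Longrightarrow> z \<ge> 0 \<Longrightarrow> \<Theta> (u * z) u = \<Theta> z 1"
  shows "(\<integral>\<^sup>+t. ennreal (exp (-t)) * (\<integral>\<^sup>+u. ennreal (exp (-u)) * \<Theta> t u * indicator {0..} u \<partial>lborel) * indicator {0..} t \<partial>lborel)
     = (\<integral>\<^sup>+z. \<Theta> z 1 * ennreal (1 / (1 + z)\<^sup>2) * indicator {0..} z \<partial>lborel)"
proof -
  have [measurable]: "(\<lambda>x. \<Theta> (f x) (g x)) \<in> borel_measurable M"
    if [measurable]: "f \<in> borel_measurable M" "g \<in> borel_measurable M" for M and f g :: "'a \<Rightarrow> real"
    using measurable_compose[OF _ \<Theta>_measurable, of "\<lambda>x. (f x, g x)"] by simp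
  have scale_t: "(\<integral>\<^sup>+t. ennreal (exp (-t)) * indicator {0..} t * (ennreal (exp (-u)) * \<Theta> t u * indicator {0..} u) \<partial>lborel)
      = (\<integral>\<^sup>+z. ennreal (u * exp (-u) * exp (-(u*z))) * indicator {0..} u * (\<Theta> z 1 * indicator {0..} z) \<partial>lborel)"
    if u: "u \<noteq> 0" for u
  proof (cases "u > 0")
    case True
    have "(\<integral>\<^sup>+t. ennreal (exp (-t)) * indicator {0..} t * (ennreal (exp (-u)) * \<Theta> t u * indicator {0..} u) \<partial>lborel)
      = ennreal u * (\<integral>\<^sup>+z. ennreal (exp (-(0 + u*z))) * indicator {0..} (0 + u*z)
          * (ennreal (exp (-u)) * \<Theta> (0 + u*z) u * indicator {0..} u) \<partial>lborel)"
      using True by (subst nn_integral_real_affine[where c=u and t=0]) auto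
    also have "\<dots> = (\<integral>\<^sup>+z. ennreal u * (ennreal (exp (-(0 + u*z))) * indicator {0..} (0 + u*z)
          * (ennreal (exp (-u)) * \<Theta> (0 + u*z) u * indicator {0..} u)) \<partial>lborel)"
      by (rule nn_integral_cmult[symmetric]) measurable
    also have "\<dots> = (\<integral>\<^sup>+z. ennreal (u * exp (-u) * exp (-(u*z))) * indicator {0..} u * (\<Theta> z 1 * indicator {0..} z) \<partial>lborel)"
      using True hom[OF True]
      by (intro nn_integral_cong) (auto simp: indicator_def zero_le_mult_iff ennreal_mult mult_ac)
    finally show ?thesis .
  qed (use u in \<open>simp add: indicator_def\<close>)
  have "(\<integral>\<^sup>+t. ennreal (exp (-t)) * (\<integral>\<^sup>+u. ennreal (exp (-u)) * \<Theta> t u * indicator {0..} u \<partial>lborel) * indicator {0..} t \<partial>lborel)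
      = (\<integral>\<^sup>+t. \<integral>\<^sup>+u. ennreal (exp (-t)) * indicator {0..} t * (ennreal (exp (-u)) * \<Theta> t u * indicator {0..} u) \<partial>lborel \<partial>lborel)"
    by (intro nn_integral_cong) (subst nn_integral_cmult; simp add: mult_ac)
  also have "\<dots> = (\<integral>\<^sup>+u. \<integral>\<^sup>+t. ennreal (exp (-t)) * indicator {0..} t * (ennreal (exp (-u)) * \<Theta> t u * indicator {0..} u) \<partial>lborel \<partial>lborel)"
    by (rule lborel_pair.Fubini'[symmetric]) measurable
  also have "\<dots> = (\<integral>\<^sup>+u. \<integral>\<^sup>+z. ennreal (u * exp (-u) * exp (-(u*z))) * indicator {0..} u * (\<Theta> z 1 * indicator {0..} z) \<partial>lborel \<partial>lborel)"
    by (rule nn_integral_cong_AE) (use AE_lborel_singleton[of 0] scale_t in \<open>auto elim!: eventually_mono\<close>)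
  also have "\<dots> = (\<integral>\<^sup>+z. \<integral>\<^sup>+u. ennreal (u * exp (-u) * exp (-(u*z))) * indicator {0..} u * (\<Theta> z 1 * indicator {0..} z) \<partial>lborel \<partial>lborel)"
    by (rule lborel_pair.Fubini') measurable
  also have "\<dots> = (\<integral>\<^sup>+z. \<Theta> z 1 * ennreal (1 / (1 + z)\<^sup>2) * indicator {0..} z \<partial>lborel)"
  proof (rule nn_integral_cong)
    fix z :: real
    have exp_sum: "u * exp (-u) * exp (-(u*z)) = u * exp (-((1 + z) * u))" for u
      by (simp add: exp_add[symmetric] algebra_simps)
    have "(\<integral>\<^sup>+u. ennreal (u * exp (-u) * exp (-(u*z))) * indicator {0..} u * (\<Theta> z 1 * indicator {0..} z) \<partial>lborel)
       = (\<integral>\<^sup>+u. ennreal (u * exp (-((1 + z) * u))) * indicator {0..} u \<partial>lborel) * (\<Theta> z 1 * indicator {0..} z)"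
      by (subst nn_integral_multc[symmetric]) (auto intro!: nn_integral_cong simp: exp_sum)
    also have "\<dots> = \<Theta> z 1 * ennreal (1 / (1 + z)\<^sup>2) * indicator {0..} z"
      using nn_integral_times_exp_scaled[of "1 + z"] by (cases "z \<ge> 0") (simp_all add: mult_ac)
    finally show "(\<integral>\<^sup>+u. ennreal (u * exp (-u) * exp (-(u*z))) * indicator {0..} u * (\<Theta> z 1 * indicator {0..} z) \<partial>lborel)
       = \<Theta> z 1 * ennreal (1 / (1 + z)\<^sup>2) * indicator {0..} z" .
  qed
  finally show ?thesis .
qed

section \<open>The hypergeometric side\<close>

lemma pochhammer_div_pochhammer_plus1: "b > 0 \<Longrightarrow> pochhammer (b::real) n / pochhammer (b + 1) n = b / (b + real n)"
proof (induction n)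
  case 0 then show ?case by simp
next
  case (Suc n)
  have "pochhammer b (Suc n) / pochhammer (b + 1) (Suc n) = (pochhammer b n / pochhammer (b + 1) n) * ((b + n) / (b + 1 + n))"
    by (simp add: pochhammer_Suc)
  also have "\<dots> = b / (b + n) * ((b + n) / (b + 1 + n))" using Suc by simp
  also have "\<dots> = b / (b + 1 + n)"
  proof -
    have "b + real n \<noteq> 0" using Suc.prems by simp
    then show ?thesis by simp
  qed
  also have "\<dots> = b / (b + real (Suc n))" by (simp add: add_ac)
  finally show ?case .
qed

lemma hyp2f1_1_sums:
  assumes b: "b > 0" and z: "\<bar>z\<bar> < 1"
  shows "(\<lambda>n. z ^ n / (b + real n)) sums (hyp2f1 1 b (b + 1) z / b)"
proof -
  have eq: "pochhammer 1 n * pochhammer b n / (pochhammer (b+1) n * fact n) * z ^ n = b * (z ^ n / (b + real n))" for n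
    using pochhammer_div_pochhammer_plus1[OF b, of n] by (simp add: pochhammer_fact[symmetric])
  have sm: "summable (\<lambda>n. z ^ n / (b + real n))"
  proof (rule summable_comparison_test')
    show "summable (\<lambda>n. \<bar>z\<bar> ^ n / b)" using z by (simp add: summable_divide)
    show "norm (z ^ n / (b + real n)) \<le> \<bar>z\<bar> ^ n / b" for n
      using b by (simp add: power_abs frac_le)
  qed
  have "hyp2f1 1 b (b + 1) z = b * (\<Sum>n. z ^ n / (b + real n))"
    unfolding hyp2f1_def eq using sm by (rule suminf_mult)
  then show ?thesis using b summable_sums[OF sm] by simp
qed

text \<open>\<open>Kprim s y = \<integral>\<^sub>0\<^sup>y t\<^sup>s / (1 - t)\<^sup>2 dt\<close>, integrated term by term.\<close>

definition Kprim :: "real \<Rightarrow> real \<Rightarrow> real" where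
  "Kprim s y = (\<Sum>n. (real n + 1) * y powr (real n + s + 1) / (real n + s + 1))"

lemma Kprim_sums:
  assumes s: "s > 0" and y: "0 < y" "y < 1"
  shows "(\<lambda>n. (real n + 1) * y powr (real n + s + 1) / (real n + s + 1)) sums Kprim s y"
    and "(\<lambda>n. (real n + 1) * y ^ n / (real n + s + 1)) sums (Kprim s y / y powr (s + 1))"
proof -
  have t: "(real n + 1) * y powr (real n + s + 1) / (real n + s + 1) = y powr (s + 1) * ((real n + 1) * y ^ n / (real n + s + 1))" for n
    using y by (simp add: powr_add powr_realpow add.commute add.left_commute mult_ac)
  have sm: "summable (\<lambda>n. (real n + 1) * y ^ n / (real n + s + 1))"
  proof (rule summable_comparison_test')
    show "summable (\<lambda>n. of_nat (Suc n) * y ^ n)" using geometric_deriv_sums[of y] y by (auto simp: sums_iff)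
    show "norm ((real n + 1) * y ^ n / (real n + s + 1)) \<le> of_nat (Suc n) * y ^ n" for n
      using s y by (auto simp: field_simps)
  qed
  then have "summable (\<lambda>n. (real n + 1) * y powr (real n + s + 1) / (real n + s + 1))"
    unfolding t by (rule summable_mult)
  then show "(\<lambda>n. (real n + 1) * y powr (real n + s + 1) / (real n + s + 1)) sums Kprim s y"
    unfolding Kprim_def by (simp add: summable_sums)
  have "Kprim s y = y powr (s + 1) * (\<Sum>n. (real n + 1) * y ^ n / (real n + s + 1))"
    unfolding Kprim_def t using sm by (rule suminf_mult)
  then show "(\<lambda>n. (real n + 1) * y ^ n / (real n + s + 1)) sums (Kprim s y / y powr (s + 1))"
    using sm y by (simp add: summable_sums)
qed

lemma Kprim_mono:
  assumes s: "s > 0" and ab: "0 < a" "a \<le> b" "b < 1"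
  shows "Kprim s a \<le> Kprim s b"
proof (rule sums_le[OF _ Kprim_sums(1)[OF s, of a] Kprim_sums(1)[OF s, of b]])
  fix n
  have "a powr (real n + s + 1) \<le> b powr (real n + s + 1)" by (rule powr_mono2) (use ab s in auto)
  then show "(real n + 1) * a powr (real n + s + 1) / (real n + s + 1) \<le> (real n + 1) * b powr (real n + s + 1) / (real n + s + 1)"
    using s by (intro divide_right_mono mult_left_mono) auto
qed (use ab in auto)

lemma Kprim_hyp2f1:
  assumes s: "s > 0" and z: "0 < z" "z < 1"
  shows "Kprim s z / z powr (s + 1) = hyp2f1 1 (s+1) (s+2) z / (s+1) + z / (1 - z) - (s+1)/(s+2) * z * hyp2f1 1 (s+2) (s+3) z"
proof -
  define F1 F2 where "F1 = hyp2f1 1 (s+1) (s+2) z" and "F2 = hyp2f1 1 (s+2) (s+3) z"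
  have z': "\<bar>z\<bar> < 1" using z by simp
  have S1: "(\<lambda>n. z^n / (s + 1 + real n)) sums (F1 / (s + 1))"
    using hyp2f1_1_sums[of "s + 1" z] s z' unfolding F1_def by (simp add: add.assoc)
  have S2: "(\<lambda>n. z^n / (s + 2 + real n)) sums (F2 / (s + 2))"
    using hyp2f1_1_sums[of "s + 2" z] s z' unfolding F2_def by (simp add: add.assoc)
  have "(\<lambda>n. z^n - s * (z^n / (s + 1 + real n))) sums (1 / (1 - z) - s * (F1 / (s + 1)))"
    using z' by (intro sums_diff geometric_sums sums_mult S1) simp
  moreover have "z^n - s * (z^n / (s + 1 + real n)) = (real n + 1) * z ^ n / (real n + s + 1)" for n
    using s by (simp add: field_simps)
  ultimately have K: "Kprim s z / z powr (s + 1) = 1 / (1 - z) - s * (F1 / (s + 1))"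
    using Kprim_sums(2)[OF s z] by (simp add: sums_iff)
  have "(\<lambda>n. z^(Suc n) / (s + 1 + real (Suc n))) sums (F1 / (s + 1) - 1 / (s + 1))"
    using S1 by (subst sums_Suc_iff) simp
  moreover have "z^(Suc n) / (s + 1 + real (Suc n)) = z * (z^n / (s + 2 + real n))" for n
    by (simp add: add_ac)
  ultimately have "(\<lambda>n. z * (z^n / (s + 2 + real n))) sums (F1 / (s + 1) - 1 / (s + 1))"
    by (simp only:)
  then have shift: "z * (F2 / (s + 2)) = F1 / (s + 1) - 1 / (s + 1)"
    using sums_mult[OF S2, of z] sums_unique2 by blast
  have "(s+1)/(s+2) * z * F2 = (s + 1) * (z * (F2 / (s + 2)))" by simp
  also have "\<dots> = F1 - 1"
    proof -
      have "s + 1 \<noteq> 0" using s by simp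
      then show ?thesis unfolding shift right_diff_distrib by simp
    qed
  finally have F2: "(s+1)/(s+2) * z * F2 = F1 - 1" .
  have "1 / (1 - z) = z / (1 - z) + 1" "F1 / (s + 1) - (F1 - 1) = 1 - s * (F1 / (s + 1))"
    using s z by (simp_all add: field_simps)
  then show ?thesis
    unfolding K F1_def[symmetric] F2_def[symmetric] F2 by linarith
qed

lemma G_fun_Kprim:
  assumes a: "\<alpha> > 0" and z: "0 < z" "z < 1"
  shows "G_fun (2 * z) \<alpha> = Gamma (2/\<alpha> + 1) * 2 powr (2/\<alpha> - 1) * Kprim (2/\<alpha>) z"
proof -
  define s where "s = 2/\<alpha>"
  have s: "s > 0" unfolding s_def using a by simp
  have al: "\<alpha> = 2 / s" unfolding s_def using a by simp
  have e1: "\<alpha> / (\<alpha> + 2) = 1 / (s + 1)" unfolding al using s by (simp add: field_simps)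
  have e2: "\<alpha> * (2 * z) / (4 * (\<alpha> + 1)) = z / (s + 2)" unfolding al using s by (simp add: field_simps)
  have e3: "Gamma (s + 2) = (s + 1) * Gamma (s + 1)"
  proof -
    have "s + 1 \<notin> \<int>\<^sub>\<le>\<^sub>0" using s by (auto elim!: nonpos_Ints_cases)
    then show ?thesis using Gamma_plus1[of "s + 1"] by (simp add: add.assoc)
  qed
  have e4: "(2 * z) powr (s + 1) / 4 = 2 powr (s - 1) * z powr (s + 1)"
  proof -
    have "(2 * z) powr (s + 1) = 2 powr (s + 1) * z powr (s + 1)" using z by (simp add: powr_mult)
    moreover have "2 powr (s + 1) = 2 powr (s - 1) * 4"
      using powr_add[of 2 "s - 1" 2] by (simp add: add.commute)
    ultimately show ?thesis by simp
  qed
  have e5: "2 * z / (2 - 2 * z) = z / (1 - z)" using z by (simp add: field_simps)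
  have zp: "z powr (s + 1) > 0" using z by simp
  have KI: "Kprim s z = z powr (s + 1) * (hyp2f1 1 (s+1) (s+2) z / (s+1) + z / (1 - z) - (s+1)/(s+2) * z * hyp2f1 1 (s+2) (s+3) z)"
    using Kprim_hyp2f1[OF s z] zp by (simp add: field_simps)
  have "G_fun (2 * z) \<alpha> = (2 * z) powr (s + 1) / 4 *
     (Gamma (s + 1) * (2 * z / (2 - 2 * z) + \<alpha> / (\<alpha> + 2) * hyp2f1 1 (s + 1) (s + 2) z)
      - \<alpha> * (2 * z) / (4 * (\<alpha> + 1)) * Gamma (s + 2) * hyp2f1 1 (s + 2) (s + 3) z)"
    unfolding G_fun_def s_def by simp
  also have "\<dots> = 2 powr (s - 1) * z powr (s + 1) *
     (Gamma (s + 1) * (z / (1 - z) + 1 / (s + 1) * hyp2f1 1 (s + 1) (s + 2) z)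
      - z / (s + 2) * ((s + 1) * Gamma (s + 1)) * hyp2f1 1 (s + 2) (s + 3) z)"
    unfolding e1 e2 e3 e4 e5 ..
  also have "\<dots> = Gamma (s + 1) * 2 powr (s - 1) * Kprim s z"
    unfolding KI by (simp add: algebra_simps add_divide_distrib)
  finally show ?thesis unfolding s_def .
qed

lemma powr_div_one_minus_sq_sums:
  assumes y: "0 < y" "y < 1"
  shows "(\<lambda>n. (real n + 1) * y powr (real n + s)) sums (y powr s / (1 - y)\<^sup>2)"
proof -
  have "(\<lambda>n. y powr s * (of_nat (Suc n) * y ^ n)) sums (y powr s * (1 / (1 - y)\<^sup>2))"
    by (intro sums_mult geometric_deriv_sums) (use y in simp)
  moreover have "y powr s * (of_nat (Suc n) * y ^ n) = (real n + 1) * y powr (real n + s)" for n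
    using y by (simp add: powr_add powr_realpow mult_ac)
  ultimately show ?thesis by simp
qed

lemma nn_integral_powr_Icc:
  fixes p :: real
  assumes p: "p \<ge> 0" and ab: "0 < a" "a \<le> b"
  shows "(\<integral>\<^sup>+y. ennreal (y powr p) * indicator {a..b} y \<partial>lborel) = ennreal ((b powr (p + 1) - a powr (p + 1)) / (p + 1))"
proof -
  have "(\<integral>\<^sup>+y. ennreal (y powr p) * indicator {a..b} y \<partial>lborel)
      = ennreal ((\<lambda>y. y powr (p + 1) / (p + 1)) b - (\<lambda>y. y powr (p + 1) / (p + 1)) a)"
  proof (rule nn_integral_FTC_Icc)
    fix y assume "y \<in> {a..b}"
    then have "y > 0" using ab by auto
    then show "((\<lambda>y. y powr (p + 1) / (p + 1)) has_real_derivative y powr p) (at y)"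
      using p by (auto intro!: derivative_eq_intros)
  qed (use ab in auto)
  then show ?thesis by (simp add: diff_divide_distrib)
qed

lemma nn_integral_powr_div_one_minus_sq:
  assumes s: "s > 0" and ab: "0 < a" "a \<le> b" "b < 1"
  shows "(\<integral>\<^sup>+y. ennreal (y powr s / (1 - y)\<^sup>2) * indicator {a..b} y \<partial>lborel) = ennreal (Kprim s b - Kprim s a)"
proof -
  define t where "t n = (real n + 1) * ((b powr (real n + s + 1) - a powr (real n + s + 1)) / (real n + s + 1))" for n
  have "(\<lambda>n. (real n + 1) * b powr (real n + s + 1) / (real n + s + 1)
      - (real n + 1) * a powr (real n + s + 1) / (real n + s + 1)) sums (Kprim s b - Kprim s a)"
    using Kprim_sums(1)[OF s, of b] Kprim_sums(1)[OF s, of a] ab by (intro sums_diff) auto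
  then have t_sums: "t sums (Kprim s b - Kprim s a)"
    unfolding t_def by (simp add: diff_divide_distrib right_diff_distrib)
  have "a powr (real n + s + 1) \<le> b powr (real n + s + 1)" for n by (rule powr_mono2) (use ab s in auto)
  then have X: "0 \<le> (b powr (real n + s + 1) - a powr (real n + s + 1)) / (real n + s + 1)" for n
    using s by (simp add: add_pos_nonneg)
  have "ennreal (y powr s / (1 - y)\<^sup>2) * indicator {a..b} y
      = (\<Sum>n. ennreal (real n + 1) * (ennreal (y powr (real n + s)) * indicator {a..b} y))" for y
  proof (cases "y \<in> {a..b}")
    case True
    then have "(\<Sum>n. ennreal ((real n + 1) * y powr (real n + s))) = ennreal (y powr s / (1 - y)\<^sup>2)"
      using ab by (intro suminf_ennreal_eq powr_div_one_minus_sq_sums) auto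
    then show ?thesis using True by (simp add: ennreal_mult)
  qed simp
  then have "(\<integral>\<^sup>+y. ennreal (y powr s / (1 - y)\<^sup>2) * indicator {a..b} y \<partial>lborel)
      = (\<Sum>n. ennreal (real n + 1) * (\<integral>\<^sup>+y. ennreal (y powr (real n + s)) * indicator {a..b} y \<partial>lborel))"
    by (simp add: nn_integral_suminf nn_integral_cmult)
  also have "\<dots> = (\<Sum>n. ennreal (t n))"
  proof (rule suminf_cong)
    fix n
    have p: "0 \<le> real n + s" using s by simp
    show "ennreal (real n + 1) * (\<integral>\<^sup>+y. ennreal (y powr (real n + s)) * indicator {a..b} y \<partial>lborel) = ennreal (t n)"
      unfolding t_def nn_integral_powr_Icc[OF p ab(1,2)] by (rule ennreal_mult[symmetric, OF _ X]) simp
  qed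
  also have "\<dots> = ennreal (Kprim s b - Kprim s a)"
    using X by (intro suminf_ennreal_eq[OF _ t_sums]) (simp add: t_def del: times_divide_eq_right)
  finally show ?thesis .
qed

section \<open>The eigenvalue-ratio substitution\<close>

text \<open>The substitution \<open>y = \<phi> z\<close> with \<open>2 \<phi> z = (l\<^sub>1\<^sup>2 z + l\<^sub>2\<^sup>2) / (l\<^sub>1 z + l\<^sub>2)\<close> maps \<open>[0, \<infinity>)\<close>
  increasingly onto \<open>[l\<^sub>2/2, l\<^sub>1/2)\<close>; here \<open>l\<^sub>1 = 1 + \<rho>, l\<^sub>2 = 1 - \<rho>\<close> are the eigenvalues of \<open>R\<close>.\<close>

lemma eigenvalue_ratio_subst_identities:
  fixes \<rho> z :: real
  assumes r: "0 < \<rho>" "\<rho> < 1" and z: "z \<ge> 0"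
  defines "l1 \<equiv> 1 + \<rho>" and "l2 \<equiv> 1 - \<rho>"
  defines "\<phi> \<equiv> l1 / 2 - (1 - \<rho>) * \<rho> / (l1 * z + l2)"
  shows "2 * \<phi> = (l1\<^sup>2 * z + l2\<^sup>2) / (l1 * z + l2)"
    and "(1 - \<rho>\<^sup>2) / (4 * \<rho>) / (1 - \<phi>)\<^sup>2 * ((1 - \<rho>) * \<rho> * l1 / (l1 * z + l2)\<^sup>2) = 1 / (1 + z)\<^sup>2"
proof -
  define d where "d = l1 * z + l2"
  have d: "d > 0" unfolding d_def l1_def l2_def using r z by (simp add: add_nonneg_pos)
  show "2 * \<phi> = (l1\<^sup>2 * z + l2\<^sup>2) / (l1 * z + l2)"
    using d unfolding \<phi>_def d_def l1_def l2_def by (simp add: field_simps power2_eq_square)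
  have l: "l1 > 0" "l2 > 0" using r unfolding l1_def l2_def by simp_all
  have one_minus: "1 - \<phi> = l1 * l2 * (1 + z) / (2 * d)"
    using d unfolding \<phi>_def d_def l1_def l2_def by (simp add: field_simps)
  have "(1 - \<rho>\<^sup>2) / (4 * \<rho>) / (1 - \<phi>)\<^sup>2 * ((1 - \<rho>) * \<rho> * l1 / d\<^sup>2)
      = (1 - \<rho>\<^sup>2) / (4 * \<rho>) * ((1 - \<rho>) * \<rho> * l1) * 4 / (l1 * l2 * (1 + z))\<^sup>2"
    unfolding one_minus using d l z by (simp add: power_divide power_mult_distrib)
  also have "(1 - \<rho>\<^sup>2) / (4 * \<rho>) * ((1 - \<rho>) * \<rho> * l1) * 4 = (l1 * l2)\<^sup>2"
    unfolding l1_def l2_def using r by (simp add: field_simps power2_eq_square)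
  finally show "(1 - \<rho>\<^sup>2) / (4 * \<rho>) / (1 - \<phi>)\<^sup>2 * ((1 - \<rho>) * \<rho> * l1 / (l1 * z + l2)\<^sup>2) = 1 / (1 + z)\<^sup>2"
    using l z unfolding d_def by (simp add: power_mult_distrib)
qed

lemma nn_integral_eigenvalue_ratio_subst:
  fixes \<rho> s :: real
  assumes r: "0 < \<rho>" "\<rho> < 1"
  defines "l1 \<equiv> 1 + \<rho>" and "l2 \<equiv> 1 - \<rho>"
  shows "(\<integral>\<^sup>+z. ennreal (((l1\<^sup>2 * z + l2\<^sup>2) / (l1 * z + l2)) powr s) * ennreal (1 / (1 + z)\<^sup>2) * indicator {0..} z \<partial>lborel)
     = ennreal ((1 - \<rho>\<^sup>2) / (4 * \<rho>) * 2 powr s) * (\<integral>\<^sup>+y. ennreal (y powr s / (1 - y)\<^sup>2) * indicator {l2/2..l1/2} y \<partial>lborel)"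
proof -
  define C where "C = (1 - \<rho>\<^sup>2) / (4 * \<rho>)"
  define \<kappa> where "\<kappa> = (1 - \<rho>) * \<rho>"
  define \<phi> where "\<phi> z = l1 / 2 - \<kappa> / (l1 * z + l2)" for z
  define \<phi>' where "\<phi>' z = \<kappa> * l1 / (l1 * z + l2)\<^sup>2" for z
  define f where "f y = ennreal (C * (2 * y) powr s / (1 - y)\<^sup>2)" for y
  have l: "l1 > 0" "l2 > 0" and \<kappa>: "\<kappa> > 0" using r unfolding l1_def l2_def \<kappa>_def by auto
  have C: "C > 0" using r unfolding C_def by (simp add: power_less_one_iff)
  have pos: "l1 * z + l2 > 0" if "z \<ge> 0" for z using l that by (simp add: add_nonneg_pos)
  have [measurable]: "f \<in> borel_measurable borel" unfolding f_def by measurable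
  have "(\<integral>\<^sup>+z. ennreal (((l1\<^sup>2 * z + l2\<^sup>2) / (l1 * z + l2)) powr s) * ennreal (1 / (1 + z)\<^sup>2) * indicator {0..} z \<partial>lborel)
      = (\<integral>\<^sup>+z. f (\<phi> z) * ennreal (\<phi>' z) * indicator {0..} z \<partial>lborel)"
  proof (intro nn_integral_cong)
    fix z :: real
    show "ennreal (((l1\<^sup>2 * z + l2\<^sup>2) / (l1 * z + l2)) powr s) * ennreal (1 / (1 + z)\<^sup>2) * indicator {0..} z
        = f (\<phi> z) * ennreal (\<phi>' z) * indicator {0..} z"
    proof (cases "z \<ge> 0")
      case True
      have "2 * \<phi> z = (l1\<^sup>2 * z + l2\<^sup>2) / (l1 * z + l2)" "C / (1 - \<phi> z)\<^sup>2 * \<phi>' z = 1 / (1 + z)\<^sup>2"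
        using eigenvalue_ratio_subst_identities[OF r True]
        unfolding \<phi>_def \<phi>'_def C_def \<kappa>_def l1_def l2_def by simp_all
      moreover have "C * (2 * \<phi> z) powr s / (1 - \<phi> z)\<^sup>2 * \<phi>' z = (2 * \<phi> z) powr s * (C / (1 - \<phi> z)\<^sup>2 * \<phi>' z)"
        by simp
      moreover have "0 \<le> \<phi>' z" unfolding \<phi>'_def using \<kappa> l by simp
      ultimately show ?thesis
        unfolding f_def using C True by (simp add: ennreal_mult[symmetric])
    qed simp
  qed
  also have "\<dots> = (\<integral>\<^sup>+y. f y * indicator {\<phi> 0..<l1/2} y \<partial>lborel)"
  proof (rule nn_integral_substitution_Ici[symmetric])
    show "\<phi> \<in> borel_measurable borel" "\<phi>' \<in> borel_measurable borel"
      unfolding \<phi>_def \<phi>'_def by measurable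
    show "(\<phi> has_real_derivative \<phi>' z) (at z)" if "z \<ge> 0" for z
      using pos[OF that] unfolding \<phi>_def \<phi>'_def
      by (auto intro!: derivative_eq_intros simp: power2_eq_square)
    show "continuous_on {0..} \<phi>'"
      unfolding \<phi>'_def using pos by (intro continuous_intros) (fastforce simp: power2_eq_square)
    show "0 \<le> \<phi>' z" for z unfolding \<phi>'_def using \<kappa> l by simp
    show "(\<phi> \<longlongrightarrow> l1 / 2) at_top" unfolding \<phi>_def using l by real_asymp
    show "\<phi> z < l1 / 2" if "z \<ge> 0" for z unfolding \<phi>_def using \<kappa> pos[OF that] by simp
  qed measurable
  also have "\<dots> = (\<integral>\<^sup>+y. f y * indicator {l2/2..l1/2} y \<partial>lborel)"
  proof -
    have "\<phi> 0 = l2 / 2" unfolding \<phi>_def \<kappa>_def l1_def l2_def using r by (simp add: field_simps)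
    then show ?thesis
      by (intro nn_integral_cong_AE) (use AE_lborel_singleton[of "l1/2"] in \<open>auto elim!: eventually_mono simp: indicator_def\<close>)
  qed
  also have "\<dots> = (\<integral>\<^sup>+y. ennreal (C * 2 powr s) * (ennreal (y powr s / (1 - y)\<^sup>2) * indicator {l2/2..l1/2} y) \<partial>lborel)"
    using l C unfolding f_def
    by (intro nn_integral_cong) (auto simp: indicator_def powr_mult ennreal_mult[symmetric] mult_ac)
  also have "\<dots> = ennreal (C * 2 powr s) * (\<integral>\<^sup>+y. ennreal (y powr s / (1 - y)\<^sup>2) * indicator {l2/2..l1/2} y \<partial>lborel)"
    by (rule nn_integral_cmult) measurable
  finally show ?thesis unfolding C_def .
qed

section \<open>The square root of \<open>R\<close>\<close>

definition Rmat_sqrt :: "real \<Rightarrow> real^2^2" where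
  "Rmat_sqrt \<rho> = (\<chi> i j. if i = j then (sqrt (1 + \<rho>) + sqrt (1 - \<rho>)) / 2 else (sqrt (1 + \<rho>) - sqrt (1 - \<rho>)) / 2)"

lemma Rmat_sqrt_entries:
  assumes "\<bar>\<rho>\<bar> \<le> 1"
  obtains p q where "\<And>i j. Rmat_sqrt \<rho> $ i $ j = (if i = j then p else q)"
    and "p * p + q * q = 1" and "p * q + q * p = \<rho>" and "p + q = sqrt (1 + \<rho>)" and "p - q = sqrt (1 - \<rho>)"
proof
  define p where "p = (sqrt (1 + \<rho>) + sqrt (1 - \<rho>)) / 2"
  define q where "q = (sqrt (1 + \<rho>) - sqrt (1 - \<rho>)) / 2"
  show "Rmat_sqrt \<rho> $ i $ j = (if i = j then p else q)" for i j
    unfolding Rmat_sqrt_def p_def q_def by simp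
  have "sqrt (1 + \<rho>) * sqrt (1 + \<rho>) = 1 + \<rho>" "sqrt (1 - \<rho>) * sqrt (1 - \<rho>) = 1 - \<rho>"
    using assms by simp_all
  then show "p * p + q * q = 1" "p * q + q * p = \<rho>"
    unfolding p_def q_def by (simp_all add: field_simps power2_eq_square)
  show "p + q = sqrt (1 + \<rho>)" "p - q = sqrt (1 - \<rho>)" unfolding p_def q_def by (simp_all add: field_simps)
qed

text \<open>For uniqueness: a symmetric square root \<open>((a, b), (b, c))\<close> of \<open>R\<close> with nonnegative form has
  \<open>a = c\<close> and \<open>(a \<plusminus> b)\<^sup>2 = 1 \<plusminus> \<rho>\<close>, and evaluating the form at \<open>(1, \<plusminus>1)\<close> gives \<open>a \<plusminus> b \<ge> 0\<close>.\<close>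

lemma psd_sqrt_Rmat:
  assumes r: "\<bar>\<rho>\<bar> \<le> 1"
  shows "psd_sqrt (Rmat \<rho>) = Rmat_sqrt \<rho>"
  unfolding psd_sqrt_def
proof (rule the_equality)
  obtain p q where S: "\<And>i j. Rmat_sqrt \<rho> $ i $ j = (if i = j then p else q)"
    and pq: "p * p + q * q = 1" "p * q + q * p = \<rho>" "p + q = sqrt (1 + \<rho>)" "p - q = sqrt (1 - \<rho>)"
    using Rmat_sqrt_entries[OF r] by blast
  show "transpose (Rmat_sqrt \<rho>) = Rmat_sqrt \<rho> \<and> (\<forall>x. 0 \<le> x \<bullet> (Rmat_sqrt \<rho> *v x)) \<and> Rmat_sqrt \<rho> ** Rmat_sqrt \<rho> = Rmat \<rho>"
  proof (intro conjI allI)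
    show "transpose (Rmat_sqrt \<rho>) = Rmat_sqrt \<rho>" by (simp add: vec_eq_iff transpose_def S)
    fix x :: "real^2"
    have "x \<bullet> (Rmat_sqrt \<rho> *v x) = ((p + q) * (x$1 + x$2)\<^sup>2 + (p - q) * (x$1 - x$2)\<^sup>2) / 2"
      by (simp add: inner_vec_def matrix_vector_mult_def sum_2 S power2_eq_square algebra_simps)
    also have "\<dots> \<ge> 0"
      unfolding pq(3,4) using r by (intro divide_nonneg_pos add_nonneg_nonneg mult_nonneg_nonneg) auto
    finally show "0 \<le> x \<bullet> (Rmat_sqrt \<rho> *v x)" .
  next
    show "Rmat_sqrt \<rho> ** Rmat_sqrt \<rho> = Rmat \<rho>"
      using pq by (simp add: vec_eq_iff matrix_matrix_mult_def sum_2 S Rmat_def forall_2)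
  qed
next
  fix S :: "real^2^2"
  assume "transpose S = S \<and> (\<forall>x. 0 \<le> x \<bullet> (S *v x)) \<and> S ** S = Rmat \<rho>"
  then have sym: "transpose S = S" and psd: "\<And>x. 0 \<le> x \<bullet> (S *v x)" and sq: "S ** S = Rmat \<rho>"
    by blast+
  define a b c where "a = S$1$1" and "b = S$1$2" and "c = S$2$2"
  have ba: "S$2$1 = b"
    using arg_cong[OF sym, of "\<lambda>M. M$2$1"] unfolding b_def by (simp add: transpose_def)
  have q: "x \<bullet> (S *v x) = a * (x$1)\<^sup>2 + 2 * b * (x$1) * (x$2) + c * (x$2)\<^sup>2" for x
    by (simp add: inner_vec_def matrix_vector_mult_def sum_2 a_def b_def c_def ba power2_eq_square algebra_simps)
  have "0 \<le> a" "0 \<le> c"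
    using psd[of "vector [1,0]"] q[of "vector [1,0]"] psd[of "vector [0,1]"] q[of "vector [0,1]"] by simp_all
  moreover have SS: "a*a + b*b = 1" "b*b + c*c = 1" "a*b + b*c = \<rho>"
    using arg_cong[OF sq, of "\<lambda>M. M$1$1"] arg_cong[OF sq, of "\<lambda>M. M$2$2"] arg_cong[OF sq, of "\<lambda>M. M$1$2"]
    by (simp_all add: matrix_matrix_mult_def sum_2 Rmat_def a_def b_def c_def ba)
  ultimately have ac: "a = c"
    using power2_eq_iff_nonneg[of a c] by (simp add: power2_eq_square)
  have e: "(a+b)\<^sup>2 = 1 + \<rho>" "(a-b)\<^sup>2 = 1 - \<rho>"
    using SS ac by (simp_all add: power2_eq_square algebra_simps)
  have "0 \<le> a + b" "0 \<le> a - b"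
    using psd[of "vector [1,1]"] q[of "vector [1,1]"] psd[of "vector [1,-1]"] q[of "vector [1,-1]"] ac by simp_all
  then have "a + b = sqrt (1 + \<rho>)" "a - b = sqrt (1 - \<rho>)"
    using e by (auto intro!: real_sqrt_unique[symmetric])
  then show "S = Rmat_sqrt \<rho>"
    unfolding vec_eq_iff forall_2 Rmat_sqrt_def using ac ba by (simp add: a_def b_def c_def field_simps)
qed

text \<open>The ratio \<open>g\<close> in real coordinates \<open>h\<^sub>2 = (c\<^sub>1 + i d\<^sub>1, c\<^sub>2 + i d\<^sub>2)\<close>, \<open>h\<^sub>1 = (a\<^sub>1 + i b\<^sub>1, a\<^sub>2 + i b\<^sub>2)\<close>:
  since \<open>S\<^sup>2 = R\<close>, its numerator is \<open>|h\<^sub>1\<^sup>H R h\<^sub>2|\<^sup>2\<close> and its denominator \<open>h\<^sub>2\<^sup>H R h\<^sub>2\<close>.\<close>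

definition g_coords :: "real \<Rightarrow> real \<Rightarrow> real \<Rightarrow> real \<Rightarrow> real \<Rightarrow> real \<Rightarrow> real \<Rightarrow> real \<Rightarrow> real \<Rightarrow> real" where
  "g_coords \<rho> c1 d1 c2 d2 a1 b1 a2 b2 =
    ((a1*(c1 + \<rho>*c2) + b1*(d1 + \<rho>*d2) + a2*(\<rho>*c1 + c2) + b2*(\<rho>*d1 + d2))\<^sup>2 +
     (a1*(d1 + \<rho>*d2) - b1*(c1 + \<rho>*c2) + a2*(\<rho>*d1 + d2) - b2*(\<rho>*c1 + c2))\<^sup>2)
    / (c1\<^sup>2 + d1\<^sup>2 + c2\<^sup>2 + d2\<^sup>2 + 2*\<rho>*(c1*c2 + d1*d2))"

lemma norm_vec2_power2: "(norm (v :: complex^2))\<^sup>2 = (cmod (v$1))\<^sup>2 + (cmod (v$2))\<^sup>2"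
  by (simp add: norm_vec_def L2_set_def sum_2)

lemma herm_inner_ratio_eq_g_coords:
  assumes r: "\<bar>\<rho>\<bar> \<le> 1"
  defines "S \<equiv> cmat (Rmat_sqrt \<rho>)"
  shows "(cmod (herm_inner (S *v x) (S *v y)))\<^sup>2 / (norm (S *v y))\<^sup>2
    = g_coords \<rho> (Re (y$1)) (Im (y$1)) (Re (y$2)) (Im (y$2)) (Re (x$1)) (Im (x$1)) (Re (x$2)) (Im (x$2))"
proof -
  obtain p q where S: "\<And>i j. Rmat_sqrt \<rho> $ i $ j = (if i = j then p else q)"
    and pq: "p * p + q * q = 1" "p * q + q * p = \<rho>"
    using Rmat_sqrt_entries[OF r] by metis
  define a1 b1 a2 b2 where "a1 = Re (x$1)" and "b1 = Im (x$1)" and "a2 = Re (x$2)" and "b2 = Im (x$2)"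
  define c1 d1 c2 d2 where "c1 = Re (y$1)" and "d1 = Im (y$1)" and "c2 = Re (y$2)" and "d2 = Im (y$2)"
  have Sx: "(S *v x) $ 1 = Complex (p*a1 + q*a2) (p*b1 + q*b2)" "(S *v x) $ 2 = Complex (q*a1 + p*a2) (q*b1 + p*b2)"
    and Sy: "(S *v y) $ 1 = Complex (p*c1 + q*c2) (p*d1 + q*d2)" "(S *v y) $ 2 = Complex (q*c1 + p*c2) (q*d1 + p*d2)"
    by (simp_all add: S_def matrix_vector_mult_def cmat_def sum_2 S complex_eq_iff
        a1_def a2_def b1_def b2_def c1_def c2_def d1_def d2_def)
  have "herm_inner (S *v x) (S *v y) =
    Complex (a1*((p*p + q*q)*c1 + (p*q + q*p)*c2) + b1*((p*p + q*q)*d1 + (p*q + q*p)*d2)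
              + a2*((p*q + q*p)*c1 + (p*p + q*q)*c2) + b2*((p*q + q*p)*d1 + (p*p + q*q)*d2))
            (a1*((p*p + q*q)*d1 + (p*q + q*p)*d2) - b1*((p*p + q*q)*c1 + (p*q + q*p)*c2)
              + a2*((p*q + q*p)*d1 + (p*p + q*q)*d2) - b2*((p*q + q*p)*c1 + (p*p + q*q)*c2))"
    unfolding herm_inner_def sum_2 Sx Sy by (simp add: complex_eq_iff algebra_simps)
  moreover have "(norm (S *v y))\<^sup>2 = (p*p + q*q)*(c1\<^sup>2 + d1\<^sup>2 + c2\<^sup>2 + d2\<^sup>2) + 2*(p*q + q*p)*(c1*c2 + d1*d2)"
    unfolding norm_vec2_power2 Sy cmod_power2 by (simp add: power2_eq_square algebra_simps)
  ultimately show ?thesis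
    unfolding cmod_power2 g_coords_def pq a1_def a2_def b1_def b2_def c1_def c2_def d1_def d2_def by simp
qed

section \<open>Independent Gaussian coordinates\<close>

interpretation Gauss4: pair_prob_space "Gauss \<Otimes>\<^sub>M Gauss" "Gauss \<Otimes>\<^sub>M Gauss" by standard

lemma nn_integral_Gauss_prod2:
  assumes [measurable]: "f \<in> borel_measurable (Gauss \<Otimes>\<^sub>M Gauss)"
  shows "(\<integral>\<^sup>+p. f p \<partial>(Gauss \<Otimes>\<^sub>M Gauss)) = (\<integral>\<^sup>+x. \<integral>\<^sup>+y. f (x, y) \<partial>Gauss \<partial>Gauss)"
  by (rule Gauss.nn_integral_fst[symmetric]) measurable

lemma nn_integral_Gauss_prod4:
  assumes [measurable]: "f \<in> borel_measurable ((Gauss \<Otimes>\<^sub>M Gauss) \<Otimes>\<^sub>M (Gauss \<Otimes>\<^sub>M Gauss))"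
  shows "(\<integral>\<^sup>+p. f p \<partial>((Gauss \<Otimes>\<^sub>M Gauss) \<Otimes>\<^sub>M (Gauss \<Otimes>\<^sub>M Gauss))) = (\<integral>\<^sup>+x1. \<integral>\<^sup>+x2. \<integral>\<^sup>+x3. \<integral>\<^sup>+x4. f ((x1, x2), (x3, x4)) \<partial>Gauss \<partial>Gauss \<partial>Gauss \<partial>Gauss)"
proof -
  have "(\<integral>\<^sup>+p. f p \<partial>((Gauss \<Otimes>\<^sub>M Gauss) \<Otimes>\<^sub>M (Gauss \<Otimes>\<^sub>M Gauss))) = (\<integral>\<^sup>+p. \<integral>\<^sup>+q. f (p, q) \<partial>(Gauss \<Otimes>\<^sub>M Gauss) \<partial>(Gauss \<Otimes>\<^sub>M Gauss))"
    by (rule Gauss2.P.nn_integral_fst[symmetric]) measurable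
  also have "\<dots> = (\<integral>\<^sup>+x1. \<integral>\<^sup>+x2. (\<integral>\<^sup>+q. f ((x1, x2), q) \<partial>(Gauss \<Otimes>\<^sub>M Gauss)) \<partial>Gauss \<partial>Gauss)"
    by (rule nn_integral_Gauss_prod2) measurable
  also have "\<dots> = (\<integral>\<^sup>+x1. \<integral>\<^sup>+x2. \<integral>\<^sup>+x3. \<integral>\<^sup>+x4. f ((x1, x2), (x3, x4)) \<partial>Gauss \<partial>Gauss \<partial>Gauss \<partial>Gauss)"
    by (intro nn_integral_cong nn_integral_Gauss_prod2) measurable
  finally show ?thesis .
qed

lemma nn_integral_Gauss_prod8:
  assumes [measurable]: "f \<in> borel_measurable (((Gauss \<Otimes>\<^sub>M Gauss) \<Otimes>\<^sub>M (Gauss \<Otimes>\<^sub>M Gauss)) \<Otimes>\<^sub>M ((Gauss \<Otimes>\<^sub>M Gauss) \<Otimes>\<^sub>M (Gauss \<Otimes>\<^sub>M Gauss)))"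
  shows "(\<integral>\<^sup>+p. f p \<partial>(((Gauss \<Otimes>\<^sub>M Gauss) \<Otimes>\<^sub>M (Gauss \<Otimes>\<^sub>M Gauss)) \<Otimes>\<^sub>M ((Gauss \<Otimes>\<^sub>M Gauss) \<Otimes>\<^sub>M (Gauss \<Otimes>\<^sub>M Gauss))))
    = (\<integral>\<^sup>+x1. \<integral>\<^sup>+x2. \<integral>\<^sup>+x3. \<integral>\<^sup>+x4. \<integral>\<^sup>+x5. \<integral>\<^sup>+x6. \<integral>\<^sup>+x7. \<integral>\<^sup>+x8. f (((x1, x2), (x3, x4)), ((x5, x6), (x7, x8))) \<partial>Gauss \<partial>Gauss \<partial>Gauss \<partial>Gauss \<partial>Gauss \<partial>Gauss \<partial>Gauss \<partial>Gauss)"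
proof -
  have "(\<integral>\<^sup>+p. f p \<partial>(((Gauss \<Otimes>\<^sub>M Gauss) \<Otimes>\<^sub>M (Gauss \<Otimes>\<^sub>M Gauss)) \<Otimes>\<^sub>M ((Gauss \<Otimes>\<^sub>M Gauss) \<Otimes>\<^sub>M (Gauss \<Otimes>\<^sub>M Gauss))))
     = (\<integral>\<^sup>+p. \<integral>\<^sup>+q. f (p, q) \<partial>((Gauss \<Otimes>\<^sub>M Gauss) \<Otimes>\<^sub>M (Gauss \<Otimes>\<^sub>M Gauss)) \<partial>((Gauss \<Otimes>\<^sub>M Gauss) \<Otimes>\<^sub>M (Gauss \<Otimes>\<^sub>M Gauss)))"
    by (rule Gauss4.P.nn_integral_fst[symmetric]) measurable
  also have "\<dots> = (\<integral>\<^sup>+x1. \<integral>\<^sup>+x2. \<integral>\<^sup>+x3. \<integral>\<^sup>+x4. (\<integral>\<^sup>+q. f (((x1, x2), (x3, x4)), q) \<partial>((Gauss \<Otimes>\<^sub>M Gauss) \<Otimes>\<^sub>M (Gauss \<Otimes>\<^sub>M Gauss))) \<partial>Gauss \<partial>Gauss \<partial>Gauss \<partial>Gauss)"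
    by (rule nn_integral_Gauss_prod4) measurable
  also have "\<dots> = (\<integral>\<^sup>+x1. \<integral>\<^sup>+x2. \<integral>\<^sup>+x3. \<integral>\<^sup>+x4. \<integral>\<^sup>+x5. \<integral>\<^sup>+x6. \<integral>\<^sup>+x7. \<integral>\<^sup>+x8. f (((x1, x2), (x3, x4)), ((x5, x6), (x7, x8))) \<partial>Gauss \<partial>Gauss \<partial>Gauss \<partial>Gauss \<partial>Gauss \<partial>Gauss \<partial>Gauss \<partial>Gauss)"
    by (intro nn_integral_cong nn_integral_Gauss_prod4) measurable
  finally show ?thesis .
qed

context prob_space begin

lemma distr_indep_restrict_pair:
  fixes X :: "'i \<Rightarrow> 'a \<Rightarrow> real" and S T :: "'b measure"
  assumes ind: "indep_vars (\<lambda>_. borel) X UNIV" and AB: "A \<inter> B = {}"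
    and f: "f \<in> measurable (PiM A (\<lambda>_. borel)) S" and g: "g \<in> measurable (PiM B (\<lambda>_. borel)) T"
    and "distr M S (\<lambda>\<omega>. f (\<lambda>i\<in>A. X i \<omega>)) = S" and "distr M T (\<lambda>\<omega>. g (\<lambda>i\<in>B. X i \<omega>)) = T"
  shows "distr M (S \<Otimes>\<^sub>M T) (\<lambda>\<omega>. (f (\<lambda>i\<in>A. X i \<omega>), g (\<lambda>i\<in>B. X i \<omega>))) = S \<Otimes>\<^sub>M T"
proof -
  have "indep_var (PiM A (\<lambda>_. borel)) (\<lambda>\<omega>. \<lambda>i\<in>A. X i \<omega>) (PiM B (\<lambda>_. borel)) (\<lambda>\<omega>. \<lambda>i\<in>B. X i \<omega>)"
    by (rule indep_var_restrict[OF ind AB]) auto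
  from indep_var_compose[OF this f g] assms(5,6) show ?thesis
    by (simp add: comp_def indep_var_distribution_eq)
qed

lemma nn_integral_indep_Gauss8:
  fixes X :: "'i \<Rightarrow> 'a \<Rightarrow> real"
  assumes ind: "indep_vars (\<lambda>_. borel) X UNIV" and Gauss: "\<And>k. distr M Gauss (X k) = Gauss"
    and dist: "distinct [k1, k2, k3, k4, k5, k6, k7, k8]"
    and [measurable]: "F \<in> borel_measurable (((Gauss \<Otimes>\<^sub>M Gauss) \<Otimes>\<^sub>M (Gauss \<Otimes>\<^sub>M Gauss)) \<Otimes>\<^sub>M ((Gauss \<Otimes>\<^sub>M Gauss) \<Otimes>\<^sub>M (Gauss \<Otimes>\<^sub>M Gauss)))"
  shows "(\<integral>\<^sup>+\<omega>. F (((X k1 \<omega>, X k2 \<omega>), (X k3 \<omega>, X k4 \<omega>)), ((X k5 \<omega>, X k6 \<omega>), (X k7 \<omega>, X k8 \<omega>))) \<partial>M)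
    = (\<integral>\<^sup>+x1. \<integral>\<^sup>+x2. \<integral>\<^sup>+x3. \<integral>\<^sup>+x4. \<integral>\<^sup>+x5. \<integral>\<^sup>+x6. \<integral>\<^sup>+x7. \<integral>\<^sup>+x8. F (((x1, x2), (x3, x4)), ((x5, x6), (x7, x8)))
        \<partial>Gauss \<partial>Gauss \<partial>Gauss \<partial>Gauss \<partial>Gauss \<partial>Gauss \<partial>Gauss \<partial>Gauss)"
proof -
  have [measurable]: "X k \<in> measurable M Gauss" for k
    using ind unfolding indep_vars_def by (simp cong: measurable_cong_sets)
  define P2 where "P2 = Gauss \<Otimes>\<^sub>M Gauss"
  define P4 where "P4 = P2 \<Otimes>\<^sub>M P2"
  have pair: "distr M P2 (\<lambda>\<omega>. (X a \<omega>, X b \<omega>)) = P2" if "a \<noteq> b" for a b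
    using distr_indep_restrict_pair[OF ind, of "{a}" "{b}" "\<lambda>x. x a" Gauss "\<lambda>x. x b" Gauss] that Gauss
    unfolding P2_def by simp
  have quad: "distr M P4 (\<lambda>\<omega>. ((X a \<omega>, X b \<omega>), (X c \<omega>, X d \<omega>))) = P4"
    if "distinct [a, b, c, d]" for a b c d
    using distr_indep_restrict_pair[OF ind, of "{a, b}" "{c, d}" "\<lambda>x. (x a, x b)" P2 "\<lambda>x. (x c, x d)" P2]
      pair that unfolding P4_def P2_def by auto
  have oct: "distr M (P4 \<Otimes>\<^sub>M P4) (\<lambda>\<omega>. (((X k1 \<omega>, X k2 \<omega>), (X k3 \<omega>, X k4 \<omega>)), ((X k5 \<omega>, X k6 \<omega>), (X k7 \<omega>, X k8 \<omega>))))
      = P4 \<Otimes>\<^sub>M P4"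
    using distr_indep_restrict_pair[OF ind, of "{k1, k2, k3, k4}" "{k5, k6, k7, k8}"
        "\<lambda>x. ((x k1, x k2), (x k3, x k4))" P4 "\<lambda>x. ((x k5, x k6), (x k7, x k8))" P4]
      quad dist unfolding P4_def P2_def by auto
  have "(\<integral>\<^sup>+\<omega>. F (((X k1 \<omega>, X k2 \<omega>), (X k3 \<omega>, X k4 \<omega>)), ((X k5 \<omega>, X k6 \<omega>), (X k7 \<omega>, X k8 \<omega>))) \<partial>M)
      = (\<integral>\<^sup>+p. F p \<partial>distr M (P4 \<Otimes>\<^sub>M P4) (\<lambda>\<omega>. (((X k1 \<omega>, X k2 \<omega>), (X k3 \<omega>, X k4 \<omega>)), ((X k5 \<omega>, X k6 \<omega>), (X k7 \<omega>, X k8 \<omega>)))))"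
    by (rule nn_integral_distr[symmetric]) (auto simp: P4_def P2_def)
  also have "\<dots> = (\<integral>\<^sup>+p. F p \<partial>(P4 \<Otimes>\<^sub>M P4))" unfolding oct ..
  also have "\<dots> = (\<integral>\<^sup>+x1. \<integral>\<^sup>+x2. \<integral>\<^sup>+x3. \<integral>\<^sup>+x4. \<integral>\<^sup>+x5. \<integral>\<^sup>+x6. \<integral>\<^sup>+x7. \<integral>\<^sup>+x8. F (((x1, x2), (x3, x4)), ((x5, x6), (x7, x8)))
        \<partial>Gauss \<partial>Gauss \<partial>Gauss \<partial>Gauss \<partial>Gauss \<partial>Gauss \<partial>Gauss \<partial>Gauss)"
    unfolding P4_def P2_def by (rule nn_integral_Gauss_prod8) measurable
  finally show ?thesis .
qed

end

section \<open>The moment of \<open>g\<close>\<close>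

lemma nn_integral_exp_times_powr:
  fixes s c :: real
  assumes s: "s > -1" and c: "c \<ge> 0"
  shows "(\<integral>\<^sup>+t. ennreal (exp (-t)) * ennreal ((c * t) powr s) * indicator {0..} t \<partial>lborel) = ennreal (Gamma (s + 1) * c powr s)"
proof -
  have "(\<integral>\<^sup>+t. ennreal (exp (-t)) * ennreal ((c * t) powr s) * indicator {0..} t \<partial>lborel)
      = (\<integral>\<^sup>+t. ennreal (c powr s) * ennreal (indicator {0..} t * t powr (s + 1 - 1) / exp t) \<partial>lborel)"
    using c by (intro nn_integral_cong)
      (auto simp: indicator_def powr_mult exp_minus field_simps ennreal_mult[symmetric])
  also have "\<dots> = ennreal (c powr s) * ennreal (Gamma (s + 1))"
    using Gamma_conv_nn_integral_real[of "s + 1"] s by (subst nn_integral_cmult) auto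
  moreover have "Gamma (s + 1) > 0" using s by (simp add: Gamma_real_pos)
  ultimately show ?thesis by (simp add: ennreal_mult[symmetric] mult.commute)
qed

lemma Rmat_quadratic_form_nonneg:
  fixes \<rho> c1 d1 c2 d2 :: real
  assumes "0 \<le> \<rho>" "\<rho> \<le> 1"
  shows "0 \<le> c1\<^sup>2 + d1\<^sup>2 + c2\<^sup>2 + d2\<^sup>2 + 2*\<rho>*(c1*c2 + d1*d2)"
proof -
  have "c1\<^sup>2 + d1\<^sup>2 + c2\<^sup>2 + d2\<^sup>2 + 2*\<rho>*(c1*c2 + d1*d2) = (1 - \<rho>) * (c1\<^sup>2 + d1\<^sup>2 + c2\<^sup>2 + d2\<^sup>2) + \<rho> * ((c1 + c2)\<^sup>2 + (d1 + d2)\<^sup>2)"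
    by (simp add: power2_eq_square algebra_simps)
  also have "\<dots> \<ge> 0" using assms by (intro add_nonneg_nonneg mult_nonneg_nonneg) auto
  finally show ?thesis .
qed

lemma nn_integral_Gauss4_g_coords_powr:
  assumes r: "0 \<le> \<rho>" "\<rho> \<le> 1" and s: "s > -1"
  shows "(\<integral>\<^sup>+a1. \<integral>\<^sup>+b1. \<integral>\<^sup>+a2. \<integral>\<^sup>+b2. ennreal (g_coords \<rho> c1 d1 c2 d2 a1 b1 a2 b2 powr s) \<partial>Gauss \<partial>Gauss \<partial>Gauss \<partial>Gauss)
    = ennreal (Gamma (s + 1) * (((c1 + \<rho>*c2)\<^sup>2 + (d1 + \<rho>*d2)\<^sup>2 + (\<rho>*c1 + c2)\<^sup>2 + (\<rho>*d1 + d2)\<^sup>2)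
        / (c1\<^sup>2 + d1\<^sup>2 + c2\<^sup>2 + d2\<^sup>2 + 2*\<rho>*(c1*c2 + d1*d2))) powr s)"
proof -
  define D where "D = c1\<^sup>2 + d1\<^sup>2 + c2\<^sup>2 + d2\<^sup>2 + 2*\<rho>*(c1*c2 + d1*d2)"
  define W where "W = (c1 + \<rho>*c2)\<^sup>2 + (d1 + \<rho>*d2)\<^sup>2 + (\<rho>*c1 + c2)\<^sup>2 + (\<rho>*d1 + d2)\<^sup>2"
  have "D \<ge> 0" "W \<ge> 0" unfolding D_def W_def using Rmat_quadratic_form_nonneg[OF r] by simp_all
  have "(\<integral>\<^sup>+a1. \<integral>\<^sup>+b1. \<integral>\<^sup>+a2. \<integral>\<^sup>+b2. ennreal (g_coords \<rho> c1 d1 c2 d2 a1 b1 a2 b2 powr s) \<partial>Gauss \<partial>Gauss \<partial>Gauss \<partial>Gauss)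
     = (\<integral>\<^sup>+t. ennreal (exp (-t)) * ennreal ((W * t / D) powr s) * indicator {0..} t \<partial>lborel)"
    unfolding g_coords_def D_def[symmetric] W_def
    by (rule nn_integral_Gauss4_inner_product[where \<Phi>="\<lambda>t. ennreal ((t / D) powr s)"]) measurable
  also have "\<dots> = ennreal (Gamma (s + 1) * (W / D) powr s)"
    using nn_integral_exp_times_powr[OF s, of "W / D"] \<open>D \<ge> 0\<close> \<open>W \<ge> 0\<close> by (simp add: mult.commute)
  finally show ?thesis unfolding W_def D_def .
qed

lemma nn_integral_Gauss4_Rmat_ratio_powr:
  assumes r: "0 \<le> \<rho>" "\<rho> \<le> 1"
  shows "(\<integral>\<^sup>+c1. \<integral>\<^sup>+d1. \<integral>\<^sup>+c2. \<integral>\<^sup>+d2. ennreal ((((c1 + \<rho>*c2)\<^sup>2 + (d1 + \<rho>*d2)\<^sup>2 + (\<rho>*c1 + c2)\<^sup>2 + (\<rho>*d1 + d2)\<^sup>2)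
        / (c1\<^sup>2 + d1\<^sup>2 + c2\<^sup>2 + d2\<^sup>2 + 2*\<rho>*(c1*c2 + d1*d2))) powr s) \<partial>Gauss \<partial>Gauss \<partial>Gauss \<partial>Gauss)
    = (\<integral>\<^sup>+z. ennreal ((((1 + \<rho>)\<^sup>2 * z + (1 - \<rho>)\<^sup>2) / ((1 + \<rho>) * z + (1 - \<rho>))) powr s) * ennreal (1 / (1 + z)\<^sup>2)
        * indicator {0..} z \<partial>lborel)"
proof -
  define \<Xi> where "\<Xi> x y = ennreal ((((1 + \<rho>\<^sup>2) * x + 4 * \<rho> * y) / (x + 2 * \<rho> * y)) powr s)" for x y
  define \<Theta> where "\<Theta> t u = \<Xi> (t + u) ((t - u) / 2)" for t u
  have \<Theta>: "\<Theta> (u * z) u = \<Theta> z 1" if "u > 0" for u z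
  proof -
    have "(1 + \<rho>\<^sup>2) * (u * z + u) + 4 * \<rho> * ((u * z - u) / 2) = u * ((1 + \<rho>\<^sup>2) * (z + 1) + 4 * \<rho> * ((z - 1) / 2))"
      "u * z + u + 2 * \<rho> * ((u * z - u) / 2) = u * (z + 1 + 2 * \<rho> * ((z - 1) / 2))"
      by (simp_all add: algebra_simps)
    then show ?thesis unfolding \<Theta>_def \<Xi>_def using that by simp
  qed
  have "(1 + \<rho>\<^sup>2) * (z + 1) + 4 * \<rho> * ((z - 1) / 2) = (1 + \<rho>)\<^sup>2 * z + (1 - \<rho>)\<^sup>2"
    and "z + 1 + 2 * \<rho> * ((z - 1) / 2) = (1 + \<rho>) * z + (1 - \<rho>)" for z
    by (simp_all add: power2_eq_square field_simps)
  then have \<Theta>1: "\<Theta> z 1 = ennreal ((((1 + \<rho>)\<^sup>2 * z + (1 - \<rho>)\<^sup>2) / ((1 + \<rho>) * z + (1 - \<rho>))) powr s)" for z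
    unfolding \<Theta>_def \<Xi>_def by (simp only:)
  have "(c1 + \<rho>*c2)\<^sup>2 + (d1 + \<rho>*d2)\<^sup>2 + (\<rho>*c1 + c2)\<^sup>2 + (\<rho>*d1 + d2)\<^sup>2
      = (1 + \<rho>\<^sup>2) * (c1\<^sup>2 + d1\<^sup>2 + c2\<^sup>2 + d2\<^sup>2) + 4 * \<rho> * (c1*c2 + d1*d2)" for c1 d1 c2 d2
    by (simp add: power2_eq_square algebra_simps)
  then have "(\<integral>\<^sup>+c1. \<integral>\<^sup>+d1. \<integral>\<^sup>+c2. \<integral>\<^sup>+d2. ennreal ((((c1 + \<rho>*c2)\<^sup>2 + (d1 + \<rho>*d2)\<^sup>2 + (\<rho>*c1 + c2)\<^sup>2 + (\<rho>*d1 + d2)\<^sup>2)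
        / (c1\<^sup>2 + d1\<^sup>2 + c2\<^sup>2 + d2\<^sup>2 + 2*\<rho>*(c1*c2 + d1*d2))) powr s) \<partial>Gauss \<partial>Gauss \<partial>Gauss \<partial>Gauss)
     = (\<integral>\<^sup>+c1. \<integral>\<^sup>+d1. \<integral>\<^sup>+c2. \<integral>\<^sup>+d2. \<Xi> (c1\<^sup>2 + d1\<^sup>2 + c2\<^sup>2 + d2\<^sup>2) (c1*c2 + d1*d2) \<partial>Gauss \<partial>Gauss \<partial>Gauss \<partial>Gauss)"
    unfolding \<Xi>_def by simp
  also have "\<dots> = (\<integral>\<^sup>+t. ennreal (exp (-t)) * (\<integral>\<^sup>+u. ennreal (exp (-u)) * \<Theta> t u * indicator {0..} u \<partial>lborel)
      * indicator {0..} t \<partial>lborel)"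
    unfolding \<Theta>_def by (rule nn_integral_Gauss4_sum_difference) (unfold \<Xi>_def, measurable)
  also have "\<dots> = (\<integral>\<^sup>+z. \<Theta> z 1 * ennreal (1 / (1 + z)\<^sup>2) * indicator {0..} z \<partial>lborel)"
  proof (rule nn_integral_exp_exp_homogeneous)
    show "(\<lambda>(x, y). \<Theta> x y) \<in> borel_measurable (borel \<Otimes>\<^sub>M borel)"
      unfolding \<Theta>_def \<Xi>_def by measurable
  qed (rule \<Theta>)
  finally show ?thesis unfolding \<Theta>1 .
qed

definition g_moment :: "real \<Rightarrow> real \<Rightarrow> real" where
  "g_moment \<rho> s = Gamma (s + 1) * ((1 - \<rho>\<^sup>2) / (4 * \<rho>) * 2 powr s * (Kprim s ((1 + \<rho>) / 2) - Kprim s ((1 - \<rho>) / 2)))"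

lemma g_moment_nonneg:
  assumes "0 < \<rho>" "\<rho> < 1" "s > 0"
  shows "g_moment \<rho> s \<ge> 0"
proof -
  have "\<rho> * \<rho> < 1 * 1" using assms by (intro mult_strict_mono) auto
  moreover have "Kprim s ((1 - \<rho>) / 2) \<le> Kprim s ((1 + \<rho>) / 2)" using assms by (intro Kprim_mono) auto
  ultimately show ?thesis
    unfolding g_moment_def using assms by (intro mult_nonneg_nonneg) (auto simp: power2_eq_square less_imp_le Gamma_real_pos)
qed

lemma G_fun_difference_eq_g_moment:
  assumes a: "\<alpha> > 0" and r: "0 < \<rho>" "\<rho> < 1"
  shows "(1 - \<rho>\<^sup>2) / (2 * \<rho>) * (G_fun (1 + \<rho>) \<alpha> - G_fun (1 - \<rho>) \<alpha>) = g_moment \<rho> (2 / \<alpha>)"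
proof -
  have e: "2 * ((1 + \<rho>) / 2) = 1 + \<rho>" "2 * ((1 - \<rho>) / 2) = 1 - \<rho>" by simp_all
  have "G_fun (1 + \<rho>) \<alpha> = Gamma (2/\<alpha> + 1) * 2 powr (2/\<alpha> - 1) * Kprim (2/\<alpha>) ((1 + \<rho>) / 2)"
    "G_fun (1 - \<rho>) \<alpha> = Gamma (2/\<alpha> + 1) * 2 powr (2/\<alpha> - 1) * Kprim (2/\<alpha>) ((1 - \<rho>) / 2)"
    using G_fun_Kprim[OF a, of "(1 + \<rho>) / 2", unfolded e] G_fun_Kprim[OF a, of "(1 - \<rho>) / 2", unfolded e] r
    by simp_all
  moreover have "2 powr (2/\<alpha>) = 2 * 2 powr (2/\<alpha> - 1)" using powr_add[of 2 1 "2/\<alpha> - 1"] by simp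
  ultimately show ?thesis unfolding g_moment_def using r by (simp add: field_simps)
qed

lemma nn_integral_Gauss8_g_coords_powr:
  assumes r: "0 < \<rho>" "\<rho> < 1" and s: "s > 0"
  shows "(\<integral>\<^sup>+c1. \<integral>\<^sup>+d1. \<integral>\<^sup>+c2. \<integral>\<^sup>+d2. \<integral>\<^sup>+a1. \<integral>\<^sup>+b1. \<integral>\<^sup>+a2. \<integral>\<^sup>+b2.
      ennreal (g_coords \<rho> c1 d1 c2 d2 a1 b1 a2 b2 powr s) \<partial>Gauss \<partial>Gauss \<partial>Gauss \<partial>Gauss \<partial>Gauss \<partial>Gauss \<partial>Gauss \<partial>Gauss)
    = ennreal (g_moment \<rho> s)"
proof -
  have \<Gamma>: "Gamma (s + 1) > 0" using s by (simp add: Gamma_real_pos)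
  have "\<rho> * \<rho> < 1 * 1" using r by (intro mult_strict_mono) auto
  then have C: "(1 - \<rho>\<^sup>2) / (4 * \<rho>) * 2 powr s \<ge> 0" using r by (simp add: power2_eq_square)
  have K: "Kprim s ((1 + \<rho>) / 2) - Kprim s ((1 - \<rho>) / 2) \<ge> 0"
    using Kprim_mono[OF s, of "(1 - \<rho>) / 2" "(1 + \<rho>) / 2"] r by simp
  have "(\<integral>\<^sup>+c1. \<integral>\<^sup>+d1. \<integral>\<^sup>+c2. \<integral>\<^sup>+d2. \<integral>\<^sup>+a1. \<integral>\<^sup>+b1. \<integral>\<^sup>+a2. \<integral>\<^sup>+b2.
      ennreal (g_coords \<rho> c1 d1 c2 d2 a1 b1 a2 b2 powr s) \<partial>Gauss \<partial>Gauss \<partial>Gauss \<partial>Gauss \<partial>Gauss \<partial>Gauss \<partial>Gauss \<partial>Gauss)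
    = (\<integral>\<^sup>+c1. \<integral>\<^sup>+d1. \<integral>\<^sup>+c2. \<integral>\<^sup>+d2. ennreal (Gamma (s + 1)) * ennreal ((((c1 + \<rho>*c2)\<^sup>2 + (d1 + \<rho>*d2)\<^sup>2 + (\<rho>*c1 + c2)\<^sup>2 + (\<rho>*d1 + d2)\<^sup>2)
        / (c1\<^sup>2 + d1\<^sup>2 + c2\<^sup>2 + d2\<^sup>2 + 2*\<rho>*(c1*c2 + d1*d2))) powr s) \<partial>Gauss \<partial>Gauss \<partial>Gauss \<partial>Gauss)"
    using r s \<Gamma> by (simp add: nn_integral_Gauss4_g_coords_powr ennreal_mult)
  also have "\<dots> = ennreal (Gamma (s + 1)) * (\<integral>\<^sup>+z. ennreal ((((1 + \<rho>)\<^sup>2 * z + (1 - \<rho>)\<^sup>2) / ((1 + \<rho>) * z + (1 - \<rho>))) powr s)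
      * ennreal (1 / (1 + z)\<^sup>2) * indicator {0..} z \<partial>lborel)"
    using r by (simp add: nn_integral_cmult nn_integral_Gauss4_Rmat_ratio_powr)
  also have "\<dots> = ennreal (Gamma (s + 1)) * (ennreal ((1 - \<rho>\<^sup>2) / (4 * \<rho>) * 2 powr s)
      * ennreal (Kprim s ((1 + \<rho>) / 2) - Kprim s ((1 - \<rho>) / 2)))"
    using r s by (simp add: nn_integral_eigenvalue_ratio_subst nn_integral_powr_div_one_minus_sq)
  also have "\<dots> = ennreal (g_moment \<rho> s)"
    unfolding g_moment_def ennreal_mult[OF C K, symmetric]
    using \<Gamma> mult_nonneg_nonneg[OF C K] by (intro ennreal_mult[symmetric]) auto
  finally show ?thesis .
qed

lemma (in prob_space) nn_integral_g_coords_powr: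
  fixes X :: "'i \<Rightarrow> 'a \<Rightarrow> real"
  assumes ind: "indep_vars (\<lambda>_. borel) X UNIV" and Gauss: "\<And>k. distr M Gauss (X k) = Gauss"
    and dist: "distinct [k1, k2, k3, k4, k5, k6, k7, k8]"
    and r: "0 < \<rho>" "\<rho> < 1" and s: "s > 0"
  shows "(\<integral>\<^sup>+\<omega>. ennreal (g_coords \<rho> (X k1 \<omega>) (X k2 \<omega>) (X k3 \<omega>) (X k4 \<omega>) (X k5 \<omega>) (X k6 \<omega>) (X k7 \<omega>) (X k8 \<omega>) powr s) \<partial>M)
    = ennreal (g_moment \<rho> s)"
proof -
  define F where "F p = ennreal (g_coords \<rho> (fst (fst (fst p))) (snd (fst (fst p))) (fst (snd (fst p))) (snd (snd (fst p)))
    (fst (fst (snd p))) (snd (fst (snd p))) (fst (snd (snd p))) (snd (snd (snd p))) powr s)" for p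
  have "F \<in> borel_measurable (((Gauss \<Otimes>\<^sub>M Gauss) \<Otimes>\<^sub>M (Gauss \<Otimes>\<^sub>M Gauss)) \<Otimes>\<^sub>M ((Gauss \<Otimes>\<^sub>M Gauss) \<Otimes>\<^sub>M (Gauss \<Otimes>\<^sub>M Gauss)))"
    unfolding F_def g_coords_def by measurable
  from nn_integral_indep_Gauss8[OF ind Gauss dist this]
  have "(\<integral>\<^sup>+\<omega>. ennreal (g_coords \<rho> (X k1 \<omega>) (X k2 \<omega>) (X k3 \<omega>) (X k4 \<omega>) (X k5 \<omega>) (X k6 \<omega>) (X k7 \<omega>) (X k8 \<omega>) powr s) \<partial>M)
    = (\<integral>\<^sup>+c1. \<integral>\<^sup>+d1. \<integral>\<^sup>+c2. \<integral>\<^sup>+d2. \<integral>\<^sup>+a1. \<integral>\<^sup>+b1. \<integral>\<^sup>+a2. \<integral>\<^sup>+b2.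
      ennreal (g_coords \<rho> c1 d1 c2 d2 a1 b1 a2 b2 powr s) \<partial>Gauss \<partial>Gauss \<partial>Gauss \<partial>Gauss \<partial>Gauss \<partial>Gauss \<partial>Gauss \<partial>Gauss)"
    unfolding F_def by simp
  also have "\<dots> = ennreal (g_moment \<rho> s)" by (rule nn_integral_Gauss8_g_coords_powr[OF r s])
  finally show ?thesis .
qed

theorem corollary1:
  fixes M :: "'a measure" and h1 h2 :: "'a \<Rightarrow> complex^2" and \<alpha> \<rho> :: real
  assumes "prob_space M"
    and "\<alpha> > 2" and "0 < \<rho>" and "\<rho> < 1"
    and "prob_space.indep_vars M (\<lambda>_. borel) (coord h1 h2) UNIV"
    and "\<And>k. distributed M lborel (coord h1 h2 k) (normal_density 0 (sqrt (1/2)))"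
  shows "let S = cmat (psd_sqrt (Rmat \<rho>));
             g = (\<lambda>\<omega>. (cmod (herm_inner (S *v h1 \<omega>) (S *v h2 \<omega>)))\<^sup>2 / (norm (S *v h2 \<omega>))\<^sup>2)
         in integrable M (\<lambda>\<omega>. g \<omega> powr (2/\<alpha>)) \<and>
            prob_space.expectation M (\<lambda>\<omega>. g \<omega> powr (2/\<alpha>))
              = (1 - \<rho>\<^sup>2) / (2 * \<rho>) * (G_fun (1 + \<rho>) \<alpha> - G_fun (1 - \<rho>) \<alpha>)"
proof -
  interpret prob_space M by fact
  have r: "0 < \<rho>" "\<rho> < 1" and s: "2 / \<alpha> > 0" using assms(2-4) by simp_all
  let ?X = "coord h1 h2" and ?S = "cmat (psd_sqrt (Rmat \<rho>))"
  have [measurable]: "?X k \<in> borel_measurable M" for k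
    using assms(5) unfolding indep_vars_def by blast
  have "distr M Gauss (?X k) = Gauss" for k
    using assms(6)[of k] unfolding distributed_def Gauss_def normal_density_half_eq_gauss
    by (simp cong: distr_cong)
  then have "(\<integral>\<^sup>+\<omega>. ennreal (g_coords \<rho> (?X (False, 1, True) \<omega>) (?X (False, 1, False) \<omega>) (?X (False, 2, True) \<omega>)
      (?X (False, 2, False) \<omega>) (?X (True, 1, True) \<omega>) (?X (True, 1, False) \<omega>) (?X (True, 2, True) \<omega>)
      (?X (True, 2, False) \<omega>) powr (2 / \<alpha>)) \<partial>M) = ennreal (g_moment \<rho> (2 / \<alpha>))"
    using assms(5) r s by (intro nn_integral_g_coords_powr) simp_all
  moreover have "(cmod (herm_inner (?S *v h1 \<omega>) (?S *v h2 \<omega>)))\<^sup>2 / (norm (?S *v h2 \<omega>))\<^sup>2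
      = g_coords \<rho> (?X (False, 1, True) \<omega>) (?X (False, 1, False) \<omega>) (?X (False, 2, True) \<omega>) (?X (False, 2, False) \<omega>)
          (?X (True, 1, True) \<omega>) (?X (True, 1, False) \<omega>) (?X (True, 2, True) \<omega>) (?X (True, 2, False) \<omega>)" for \<omega>
    using r by (simp add: psd_sqrt_Rmat herm_inner_ratio_eq_g_coords coord_def)
  ultimately have "has_bochner_integral M (\<lambda>\<omega>. ((cmod (herm_inner (?S *v h1 \<omega>) (?S *v h2 \<omega>)))\<^sup>2
      / (norm (?S *v h2 \<omega>))\<^sup>2) powr (2 / \<alpha>)) (g_moment \<rho> (2 / \<alpha>))"
    using g_moment_nonneg[OF r s] by (intro has_bochner_integral_nn_integral) (simp_all add: g_coords_def)
  then show ?thesis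
    using G_fun_difference_eq_g_moment[of \<alpha> \<rho>] assms(2) r by (simp add: has_bochner_integral_iff)
qed

end
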